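(* Let $R$ be a finite commutative chain ring with maximal ideal $\langle a\rangle$, $a$ of nilpotency index $t$, residue field $\mathbb F_q$; let $t_i(X_i)$, $I$, $A$ be as in the context. Let $\mathcal K\neq0$ be a Hensel lift of a multivariable semisimple code in $A$, and let $\overline{\mathcal K}$ be its image in $\mathbb F_q[X_1,\dots,X_r]/\langle\bar t_1(X_1),\dots,\bar t_r(X_r)\rangle$ under reduction modulo $\langle a\rangle$. Then $d(\mathcal K)=d(\overline{\mathcal K})$.
   Context: Bars denote reduction mod $\langle a\rangle$, coefficientwise on polynomials. For $i=1,\dots,r$, $t_i(X_i)\in R[X_i]$ is monic with $\bar t_i$ square-free; $I=\langle t_1(X_1),\dots,t_r(X_r)\rangle$, $A=R[X_1,\dots,X_r]/I$. A semisimple code is an ideal of $A$. Elements of $A$ (resp. of the reduced algebra over $\mathbb F_q$) are identified with coefficient vectors with respect to the monomial basis $X_1^{i_1}\cdots X_r^{i_r}$, $0\le i_k<\deg t_k$; $d(\cdot)$ is the minimum Hamming weight (number of nonzero coordinates) of the nonzero elements of a code. An admissible family for a code $\mathcal K$ is a family $G_0,\dots,G_t\in R[X_1,\dots,X_r]$ with $\bigcap_{i=0}^t\mathrm{Ann}_A\langle G_i+I\rangle=0$, $\mathrm{Ann}_A\langle G_i+I\rangle+\mathrm{Ann}_A\langle G_j+I\rangle=A$ for $i\ne j$, and $\mathcal K=\langle G_1,aG_2,\dots,a^{t-1}G_t\rangle+I$. $\mathcal K$ is a Hensel lift of a multivariable semisimple code if it has an admissible family with $\langle G_1+I\rangle\neq0$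 and $\langle G_i+I\rangle=0$ for all $i=2,\dots,t$. *)

theory Defs
  imports "HOL-Library.Poly_Mapping" "HOL-Computational_Algebra.Polynomial"
begin

(* Multivariate polynomials over R in variables X_1, X_2, ... :
  finitely supported maps from monomials (exponent vectors, nat \<Rightarrow>\<^sub>0 nat)
  to coefficients. *)
type_synonym 'a mpoly = "(nat \<Rightarrow>\<^sub>0 nat) \<Rightarrow>\<^sub>0 'a"

definition is_ideal :: "'b::comm_ring_1 set \<Rightarrow> bool" where
  "is_ideal J \<longleftrightarrow> 0 \<in> J \<and> (\<forall>x\<in>J. \<forall>y\<in>J. x + y \<in> J) \<and> (\<forall>x\<in>J. \<forall>r. r * x \<in> J)"

definition gen_ideal :: "'b::comm_ring_1 set \<Rightarrow> 'b set" where
  "gen_ideal S = \<Inter>{J. is_ideal J \<and> S \<subseteq> J}"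

definition principal :: "'b::comm_ring_1 \<Rightarrow> 'b set" where
  "principal x = {r * x | r. True}"

definition maximal_ideal :: "'b::comm_ring_1 set \<Rightarrow> bool" where
  "maximal_ideal M \<longleftrightarrow> is_ideal M \<and> M \<noteq> UNIV \<and>
     (\<forall>J. is_ideal J \<and> M \<subseteq> J \<longrightarrow> J = M \<or> J = UNIV)"

definition chain_ring :: "'b::comm_ring_1 itself \<Rightarrow> bool" where
  "chain_ring _ \<longleftrightarrow> (\<forall>J K :: 'b set. is_ideal J \<and> is_ideal K \<longrightarrow> J \<subseteq> K \<or> K \<subseteq> J)"

(* Reduction modulo \<langle>a\<rangle>: an element of R/\<langle>a\<rangle> is represented by its coset. *)
definition residue :: "'b::comm_ring_1 \<Rightarrow> 'b \<Rightarrow> 'b set" where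
  "residue a c = {x. x - c \<in> principal a}"

definition embed_var :: "nat \<Rightarrow> 'b::comm_ring_1 poly \<Rightarrow> 'b mpoly" where
  "embed_var i p = (\<Sum>k\<le>degree p. Poly_Mapping.single (Poly_Mapping.single i k) (coeff p k))"

(* bar p is square-free in F_q[X], F_q = R/\<langle>a\<rangle>: there are no f, g over R
  with bar f a non-unit (i.e. of positive degree; bar p \<noteq> 0 as p is monic)
  and bar f ^ 2 * bar g = bar p. *)
definition squarefree_mod :: "'b::comm_ring_1 \<Rightarrow> 'b poly \<Rightarrow> bool" where
  "squarefree_mod a p \<longleftrightarrow>
     \<not> (\<exists>f g. (\<exists>k\<ge>1. coeff f k \<notin> principal a) \<and>
              (\<forall>k. coeff (f ^ 2 * g - p) k \<in> principal a))"

(* Annihilator in A = R[X]/I of the ideal \<langle>G + I\<rangle>, as an ideal of R[X] containing I. *)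
definition ann_mod :: "'b::comm_ring_1 mpoly set \<Rightarrow> 'b mpoly \<Rightarrow> 'b mpoly set" where
  "ann_mod I G = {f. f * G \<in> I}"

(* Monomial basis of A: X_1^{i_1}...X_r^{i_r} with i_k < deg t_k. *)
definition basis_monos :: "nat \<Rightarrow> (nat \<Rightarrow> 'b::zero poly) \<Rightarrow> (nat \<Rightarrow>\<^sub>0 nat) set" where
  "basis_monos r tp = {m. \<forall>i. (i \<in> {1..r} \<longrightarrow> Poly_Mapping.lookup m i < degree (tp i)) \<and>
                             (i \<notin> {1..r} \<longrightarrow> Poly_Mapping.lookup m i = 0)}"

(* Coefficient vectors (w.r.t. the monomial basis) of the elements of a code K \<subseteq> R[X]
  (an ideal containing I): the reduced representatives lying in K. *)
definition code_vectors :: "nat \<Rightarrow> (nat \<Rightarrow> 'b::comm_ring_1 poly) \<Rightarrow> 'b mpoly set \<Rightarrow> ((nat \<Rightarrow>\<^sub>0 nat) \<Rightarrow> 'b) set" where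
  "code_vectors r tp K = {Poly_Mapping.lookup p | p. p \<in> K \<and> Poly_Mapping.keys p \<subseteq> basis_monos r tp}"

definition reduced_vectors :: "'b::comm_ring_1 \<Rightarrow> nat \<Rightarrow> (nat \<Rightarrow> 'b poly) \<Rightarrow> 'b mpoly set \<Rightarrow> ((nat \<Rightarrow>\<^sub>0 nat) \<Rightarrow> 'b set) set" where
  "reduced_vectors a r tp K = (\<lambda>v m. residue a (v m)) ` code_vectors r tp K"

definition min_dist :: "'z \<Rightarrow> ('i \<Rightarrow> 'z) set \<Rightarrow> nat" where
  "min_dist z C = Min ((\<lambda>v. card {m. v m \<noteq> z}) ` (C - {\<lambda>_. z}))"

end

(*
  Multiplying a codeword by a^(t-1) kills exactly the coordinates lying in <a>, so every weight
  of the reduced code is a weight of K, and d(K) <= d(K bar).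

  Conversely, write a nonzero codeword as p = a^j q0 with j maximal, so that q0 has a unit
  coordinate. The code is pure: every element of K not involving the variables outside
  X_1, ..., X_r is fixed by an idempotent e of K. Indeed, for a primitive idempotent u of the
  finite algebra A the ring u A is local, and the two annihilator conditions on G_0 and G_1
  together with a leading-coefficient argument in the remaining variables show that u K is
  either 0 or u A. Hence p = e p = a^j (e q0), and the reduction of the codeword e q0 is
  nonzero and supported inside the support of p, so d(K bar) <= d(K).
*)

theory Submission
  imports Defs
begin

abbreviation lookup :: "('k \<Rightarrow>\<^sub>0 'b::zero) \<Rightarrow> 'k \<Rightarrow> 'b" where
  "lookup \<equiv> Poly_Mapping.lookup"
abbreviation keys :: "('k \<Rightarrow>\<^sub>0 'b::zero) \<Rightarrow> 'k set" where
  "keys \<equiv> Poly_Mapping.keys"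
abbreviation single :: "'k \<Rightarrow> 'b::zero \<Rightarrow> 'k \<Rightarrow>\<^sub>0 'b" where
  "single \<equiv> Poly_Mapping.single"

section \<open>Ideals\<close>

lemma is_ideal_0: "is_ideal J \<Longrightarrow> 0 \<in> J"
  by (simp add: is_ideal_def)

lemma is_ideal_add: "is_ideal J \<Longrightarrow> x \<in> J \<Longrightarrow> y \<in> J \<Longrightarrow> x + y \<in> J"
  by (simp add: is_ideal_def)

lemma is_ideal_mult_left: "is_ideal J \<Longrightarrow> x \<in> J \<Longrightarrow> r * x \<in> J"
  by (simp add: is_ideal_def)

lemma is_ideal_mult_right: "is_ideal J \<Longrightarrow> x \<in> J \<Longrightarrow> x * r \<in> J"
  using is_ideal_mult_left[of J x r] by (simp add: mult.commute)

lemma is_ideal_uminus: "is_ideal J \<Longrightarrow> x \<in> J \<Longrightarrow> - x \<in> J"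
  using is_ideal_mult_left[of J x "-1"] by simp

lemma is_ideal_diff: "is_ideal J \<Longrightarrow> x \<in> J \<Longrightarrow> y \<in> J \<Longrightarrow> x - y \<in> J"
  using is_ideal_add[of J x "-y"] is_ideal_uminus[of J y] by simp

lemma is_ideal_sum: "is_ideal J \<Longrightarrow> (\<And>i. i \<in> S \<Longrightarrow> f i \<in> J) \<Longrightarrow> sum f S \<in> J"
  by (induction S rule: infinite_finite_induct) (auto intro: is_ideal_0 is_ideal_add)

lemma is_ideal_gen_ideal: "is_ideal (gen_ideal S)"
  unfolding gen_ideal_def is_ideal_def by auto

lemma gen_ideal_superset: "S \<subseteq> gen_ideal S"
  unfolding gen_ideal_def by auto

lemma gen_ideal_minimal: "is_ideal J \<Longrightarrow> S \<subseteq> J \<Longrightarrow> gen_ideal S \<subseteq> J"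
  unfolding gen_ideal_def by auto

lemma mem_principal_iff: "y \<in> principal x \<longleftrightarrow> (\<exists>r. y = r * x)"
  by (simp add: principal_def)

lemma is_ideal_principal: "is_ideal (principal x)"
  unfolding is_ideal_def principal_def
proof (intro conjI ballI allI)
  show "0 \<in> {r * x |r. True}" by (auto intro: exI[of _ 0])
next
  fix u v assume "u \<in> {r * x |r. True}" "v \<in> {r * x |r. True}"
  then obtain r s where "u = r * x" "v = s * x" by auto
  then show "u + v \<in> {r * x |r. True}" by (auto simp: distrib_right intro: exI[of _ "r + s"])
next
  fix u w assume "u \<in> {r * x |r. True}"
  then obtain r where "u = r * x" by auto
  then show "w * u \<in> {r * x |r. True}" by (auto intro: exI[of _ "w * r"])
qed

lemma residue_eq_residue_0_iff: "residue a c = residue a 0 \<longleftrightarrow> c \<in> principal a"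
proof
  assume "residue a c = residue a 0"
  moreover have "c \<in> residue a c"
    using is_ideal_0[OF is_ideal_principal] by (simp add: residue_def)
  ultimately show "c \<in> principal a" by (simp add: residue_def)
next
  assume "c \<in> principal a"
  then have "x - c \<in> principal a \<longleftrightarrow> x \<in> principal a" for x
    using is_ideal_add[OF is_ideal_principal, of "x - c" a c]
      is_ideal_diff[OF is_ideal_principal, of x a c] by auto
  then show "residue a c = residue a 0" by (auto simp: residue_def)
qed

locale nilpotent_chain_ring =
  fixes a :: "'a::comm_ring_1" and t :: nat
  assumes chain: "chain_ring TYPE('a)" and maximal: "maximal_ideal (principal a)"
    and t_pos: "t \<ge> 1" and power_t: "a ^ t = 0" and power_t_minus_1: "a ^ (t - 1) \<noteq> 0"
begin

lemma unit_if_not_in_maximal: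
  assumes "c \<notin> principal a"
  shows "\<exists>d. c * d = 1"
proof -
  have c: "c \<in> principal c" by (auto simp: mem_principal_iff intro: exI[of _ 1])
  have "principal c \<subseteq> principal a \<or> principal a \<subseteq> principal c"
    using chain is_ideal_principal[of a] is_ideal_principal[of c] unfolding chain_ring_def by blast
  with assms c have "principal a \<subseteq> principal c" by blast
  then have "principal c = principal a \<or> principal c = UNIV"
    using maximal is_ideal_principal[of c] unfolding maximal_ideal_def by blast
  with assms c have "1 \<in> principal c" by auto
  then show ?thesis by (auto simp: mem_principal_iff mult.commute)
qed

lemma power_mult_unit_neq_0:
  assumes "j < t" and "c \<notin> principal a"
  shows "a ^ j * c \<noteq> 0"
proof
  assume ac: "a ^ j * c = 0"
  obtain d where "c * d = 1" using unit_if_not_in_maximal assms(2) by blast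
  then have "a ^ j = (a ^ j * c) * d" by (simp add: mult.assoc)
  with ac have "a ^ j = 0" by simp
  then have "a ^ j * a ^ (t - 1 - j) = 0" by simp
  with assms(1) power_t_minus_1 show False by (simp add: power_add[symmetric])
qed

lemma top_power_mult_eq_0_iff: "a ^ (t - 1) * c = 0 \<longleftrightarrow> c \<in> principal a"
proof
  assume "a ^ (t - 1) * c = 0"
  then show "c \<in> principal a" using power_mult_unit_neq_0[of "t - 1" c] t_pos by auto
next
  assume "c \<in> principal a"
  then obtain s where "c = s * a" by (auto simp: mem_principal_iff)
  then have "a ^ (t - 1) * c = s * a ^ Suc (t - 1)" by (simp add: algebra_simps)
  then show "a ^ (t - 1) * c = 0" using t_pos power_t by simp
qed

end

section \<open>Finitely supported functions\<close>

lemma lookup_single_0_mult: "lookup (single 0 c * p) m = c * lookup p m"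
  by (simp add: mult_map_scale_conv_mult[symmetric] map.rep_eq when_def)

lemma keys_single_0_mult: "keys (single 0 c * p) \<subseteq> keys p"
  by (auto simp: in_keys_iff lookup_single_0_mult)

lemma poly_mapping_eq_sum_single:
  "(p :: 'k \<Rightarrow>\<^sub>0 'b::comm_monoid_add) = (\<Sum>\<beta>\<in>keys p. single \<beta> (lookup p \<beta>))"
  by (rule poly_mapping_eqI) (simp add: lookup_sum lookup_single when_def in_keys_iff)

lemma poly_mapping_induct [case_names zero single add]:
  fixes p :: "'k \<Rightarrow>\<^sub>0 'b::comm_monoid_add"
  assumes "P 0" and "\<And>\<beta> c. P (single \<beta> c)" and "\<And>p q. P p \<Longrightarrow> P q \<Longrightarrow> P (p + q)"
  shows "P p"
proof -
  have "P (\<Sum>\<beta>\<in>S. single \<beta> (lookup p \<beta>))" if "finite S" for S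
    using that by (induction S rule: finite_induct) (auto intro: assms)
  then show ?thesis by (subst poly_mapping_eq_sum_single) simp
qed

definition extend_additive :: "('k \<Rightarrow> 'b::zero \<Rightarrow> 'c::comm_monoid_add) \<Rightarrow> ('k \<Rightarrow>\<^sub>0 'b) \<Rightarrow> 'c" where
  "extend_additive \<phi> p = (\<Sum>\<beta>\<in>keys p. \<phi> \<beta> (lookup p \<beta>))"

lemma extend_additive_superset:
  assumes "\<And>\<beta>. \<phi> \<beta> 0 = 0" and "finite S" and "keys p \<subseteq> S"
  shows "extend_additive \<phi> p = (\<Sum>\<beta>\<in>S. \<phi> \<beta> (lookup p \<beta>))"
  unfolding extend_additive_def
  by (rule sum.mono_neutral_left) (use assms in \<open>auto simp: in_keys_iff\<close>)

lemma extend_additive_add: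
  fixes \<phi> :: "'k \<Rightarrow> 'b::monoid_add \<Rightarrow> 'c::comm_monoid_add"
  assumes "\<And>\<beta>. \<phi> \<beta> 0 = 0" and "\<And>\<beta> x y. \<phi> \<beta> (x + y) = \<phi> \<beta> x + \<phi> \<beta> y"
  shows "extend_additive \<phi> (p + q) = extend_additive \<phi> p + extend_additive \<phi> q"
proof -
  let ?S = "keys p \<union> keys q"
  have "extend_additive \<phi> (p + q) = (\<Sum>\<beta>\<in>?S. \<phi> \<beta> (lookup (p + q) \<beta>))"
    using keys_add[of p q] by (intro extend_additive_superset assms) auto
  also have "\<dots> = (\<Sum>\<beta>\<in>?S. \<phi> \<beta> (lookup p \<beta>)) + (\<Sum>\<beta>\<in>?S. \<phi> \<beta> (lookup q \<beta>))"
    by (simp add: lookup_add assms sum.distrib)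
  also have "\<dots> = extend_additive \<phi> p + extend_additive \<phi> q"
    by (subst (1 2) extend_additive_superset[of \<phi>]) (use assms in auto)
  finally show ?thesis .
qed

lemma extend_additive_single:
  "(\<And>\<beta>. \<phi> \<beta> 0 = 0) \<Longrightarrow> extend_additive \<phi> (single \<beta> c) = \<phi> \<beta> c"
  by (cases "c = 0") (auto simp: extend_additive_def)

lemma extend_additive_0 [simp]: "extend_additive \<phi> 0 = 0"
  by (simp add: extend_additive_def)

lemma keys_extend_additive:
  "keys (extend_additive \<phi> p) \<subseteq> (\<Union>\<beta>\<in>keys p. keys (\<phi> \<beta> (lookup p \<beta>)))"
  unfolding extend_additive_def by (rule keys_sum)

lemma zero_le_poly_mapping: "(0 :: nat \<Rightarrow>\<^sub>0 nat) \<le> \<alpha>"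
proof (cases "\<alpha> = 0")
  case False
  then obtain k where k: "lookup \<alpha> k \<noteq> 0" by (metis poly_mapping_eqI lookup_zero)
  define k0 where "k0 = (LEAST k. lookup \<alpha> k \<noteq> 0)"
  have "lookup \<alpha> k0 \<noteq> 0" unfolding k0_def by (rule LeastI[of _ k]) (rule k)
  moreover have "\<And>k'. k' < k0 \<Longrightarrow> lookup \<alpha> k' = 0" unfolding k0_def using not_less_Least by blast
  ultimately have "less_fun (lookup 0) (lookup \<alpha>)"
    by (intro less_funI exI[of _ k0]) auto
  then have "0 < \<alpha>" by (simp add: less_poly_mapping.rep_eq)
  then show ?thesis by simp
qed simp

section \<open>Polynomials in a single variable \<open>X\<^sub>i\<close>\<close>

definition mvar :: "nat \<Rightarrow> 'a::comm_ring_1 mpoly" where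
  "mvar i = single (single i 1) 1"

lemma mvar_power: "mvar i ^ k = single (single i k) 1"
  by (induction k) (auto simp: mvar_def mult_single single_add[symmetric] add.commute)

lemma embed_var_eq_poly: "embed_var i p = poly (map_poly (single 0) p) (mvar i)"
proof -
  have d: "degree (map_poly (single 0) p) = degree p"
    by (rule degree_map_poly) (metis lookup_single_eq lookup_zero)
  show ?thesis
    unfolding embed_var_def poly_altdef d
    by (intro sum.cong refl) (simp add: coeff_map_poly mvar_power mult_single)
qed

lemma embed_var_pCons: "embed_var i (pCons c p) = single 0 c + mvar i * embed_var i p"
  by (simp add: embed_var_eq_poly map_poly_pCons)

lemma embed_var_0 [simp]: "embed_var i 0 = 0"
  by (simp add: embed_var_def)

lemma embed_var_add: "embed_var i (p + q) = embed_var i p + embed_var i q"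
proof (induction p arbitrary: q)
  case (pCons c p)
  then show ?case
    by (cases q rule: pCons_cases) (simp add: embed_var_pCons single_add algebra_simps)
qed simp

lemma embed_var_smult: "embed_var i (smult c p) = single 0 c * embed_var i p"
  by (induction p) (auto simp: embed_var_pCons mult_single algebra_simps)

lemma embed_var_mult: "embed_var i (p * q) = embed_var i p * embed_var i q"
proof (induction p)
  case (pCons c p)
  have "embed_var i (pCons 0 (p * q)) = mvar i * embed_var i (p * q)"
    using embed_var_pCons[of i 0 "p * q"] by simp
  with pCons show ?case
    by (simp add: embed_var_add embed_var_smult embed_var_pCons algebra_simps)
qed simp

lemma embed_var_monom: "embed_var i (monom c n) = single (single i n) c"
proof -
  have "embed_var i (monom c n) = single 0 c * mvar i ^ n"
    by (simp add: embed_var_eq_poly map_poly_monom poly_monom)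
  then show ?thesis by (simp add: mvar_power mult_single)
qed

lemma keys_embed_var: "keys (embed_var i p) \<subseteq> {single i k | k. coeff p k \<noteq> 0}"
proof -
  have "keys (embed_var i p) \<subseteq> (\<Union>k\<in>{..degree p}. keys (single (single i k) (coeff p k)))"
    unfolding embed_var_def by (rule keys_sum)
  also have "\<dots> \<subseteq> {single i k | k. coeff p k \<noteq> 0}" by auto
  finally show ?thesis .
qed

definition reduced_mod :: "'a::comm_ring_1 poly \<Rightarrow> 'a poly \<Rightarrow> bool" where
  "reduced_mod d r \<longleftrightarrow> r = 0 \<or> degree r < degree d"

definition monic_quot :: "'a::comm_ring_1 poly \<Rightarrow> 'a poly \<Rightarrow> 'a poly" where
  "monic_quot d p = fst (pseudo_divmod p d)"

definition monic_rem :: "'a::comm_ring_1 poly \<Rightarrow> 'a poly \<Rightarrow> 'a poly" where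
  "monic_rem d p = snd (pseudo_divmod p d)"

lemma coeff_reduced_mod: "reduced_mod d r \<Longrightarrow> coeff r k \<noteq> 0 \<Longrightarrow> k < degree d"
  unfolding reduced_mod_def using le_degree by fastforce

lemma reduced_mod_diff: "reduced_mod d r \<Longrightarrow> reduced_mod d s \<Longrightarrow> reduced_mod d (r - s)"
  unfolding reduced_mod_def
  using degree_diff_le_max[of r s] by (cases "r = 0"; cases "s = 0") auto

lemma reduced_mod_uminus: "reduced_mod d r \<Longrightarrow> reduced_mod d (- r)"
  by (simp add: reduced_mod_def)

context
  fixes d :: "'a::comm_ring_1 poly"
  assumes monic: "lead_coeff d = 1"
begin

lemma monic_div_mod: "p = d * monic_quot d p + monic_rem d p"
  and reduced_mod_monic_rem: "reduced_mod d (monic_rem d p)"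
proof -
  have "d \<noteq> 0" using monic by auto
  moreover have "pseudo_divmod p d = (monic_quot d p, monic_rem d p)"
    by (simp add: monic_quot_def monic_rem_def)
  ultimately show "p = d * monic_quot d p + monic_rem d p" "reduced_mod d (monic_rem d p)"
    using pseudo_divmod[of d p] monic by (auto simp: reduced_mod_def)
qed

lemma degree_monic_mult:
  assumes "q \<noteq> 0"
  shows "d * q \<noteq> 0" and "degree (d * q) = degree d + degree q"
proof -
  have c: "coeff (d * q) (degree d + degree q) = lead_coeff q"
    using coeff_mult_degree_sum[of d q] monic by simp
  with assms show "d * q \<noteq> 0" by (metis coeff_0 leading_coeff_0_iff)
  from c assms have "degree (d * q) \<ge> degree d + degree q" by (simp add: le_degree)
  then show "degree (d * q) = degree d + degree q" using degree_mult_le[of d q] by simp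
qed

lemma monic_rem_unique:
  assumes "p = d * q + r" and "reduced_mod d r"
  shows "monic_rem d p = r"
proof (rule ccontr)
  assume ne: "monic_rem d p \<noteq> r"
  have "d * (q - monic_quot d p) = monic_rem d p - r"
    using monic_div_mod[of p] assms(1) by (simp add: algebra_simps)
  moreover have "reduced_mod d (monic_rem d p - r)"
    by (rule reduced_mod_diff[OF reduced_mod_monic_rem assms(2)])
  moreover have "q - monic_quot d p \<noteq> 0" using calculation(1) ne by auto
  ultimately show False
    using degree_monic_mult[of "q - monic_quot d p"] by (auto simp: reduced_mod_def)
qed

lemma monic_rem_add: "monic_rem d (p + q) = monic_rem d p + monic_rem d q"
proof (rule monic_rem_unique)
  show "p + q = d * (monic_quot d p + monic_quot d q) + (monic_rem d p + monic_rem d q)"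
    using monic_div_mod[of p] monic_div_mod[of q] by (simp add: algebra_simps)
  show "reduced_mod d (monic_rem d p + monic_rem d q)"
    using reduced_mod_diff[OF reduced_mod_monic_rem reduced_mod_uminus[OF reduced_mod_monic_rem]]
    by (simp add: diff_minus_eq_add)
qed

lemma monic_rem_smult: "monic_rem d (smult c p) = smult c (monic_rem d p)"
proof (rule monic_rem_unique)
  show "smult c p = d * smult c (monic_quot d p) + smult c (monic_rem d p)"
    using monic_div_mod[of p] by (metis mult_smult_right smult_add_right)
  show "reduced_mod d (smult c (monic_rem d p))"
    using reduced_mod_monic_rem[of p] unfolding reduced_mod_def
    by (metis degree_smult_le le_less_trans smult_0_right)
qed

lemma monic_rem_mult_self: "monic_rem d (d * q) = 0"
  by (rule monic_rem_unique[of _ q]) (auto simp: reduced_mod_def)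

lemma monic_rem_reduced: "reduced_mod d p \<Longrightarrow> monic_rem d p = p"
  by (rule monic_rem_unique[of _ 0]) auto

end

definition drop_var :: "nat \<Rightarrow> (nat \<Rightarrow>\<^sub>0 nat) \<Rightarrow> (nat \<Rightarrow>\<^sub>0 nat)" where
  "drop_var i \<beta> = Poly_Mapping.update i 0 \<beta>"

lemma lookup_drop_var: "lookup (drop_var i \<beta>) l = (if l = i then 0 else lookup \<beta> l)"
  by (simp add: drop_var_def lookup_update)

lemma drop_var_add_single: "drop_var i \<beta> + single i (lookup \<beta> i) = \<beta>"
  by (rule poly_mapping_eqI) (simp add: lookup_drop_var lookup_add lookup_single when_def)

lemma drop_var_add: "drop_var i (\<beta> + \<gamma>) = drop_var i \<beta> + drop_var i \<gamma>"
  by (rule poly_mapping_eqI) (simp add: lookup_drop_var lookup_add)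

lemma drop_var_single: "drop_var i (single i k) = 0"
  by (rule poly_mapping_eqI) (simp add: lookup_drop_var lookup_single when_def)

lemma drop_var_free: "lookup \<delta> i = 0 \<Longrightarrow> drop_var i \<delta> = \<delta>"
  by (rule poly_mapping_eqI) (simp add: lookup_drop_var)

definition reduce_monomial :: "(nat \<Rightarrow> 'a::comm_ring_1 poly) \<Rightarrow> nat \<Rightarrow> (nat \<Rightarrow>\<^sub>0 nat) \<Rightarrow> 'a \<Rightarrow> 'a mpoly"
  where "reduce_monomial tp i \<beta> c =
    single 0 c * (embed_var i (monic_rem (tp i) (monom 1 (lookup \<beta> i))) * single (drop_var i \<beta>) 1)"

definition reduce_var :: "(nat \<Rightarrow> 'a::comm_ring_1 poly) \<Rightarrow> nat \<Rightarrow> 'a mpoly \<Rightarrow> 'a mpoly" where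
  "reduce_var tp i = extend_additive (reduce_monomial tp i)"

lemma reduce_monomial_0: "reduce_monomial tp i \<beta> 0 = 0"
  by (simp add: reduce_monomial_def)

lemma reduce_var_single: "reduce_var tp i (single \<beta> c) = reduce_monomial tp i \<beta> c"
  unfolding reduce_var_def by (rule extend_additive_single) (rule reduce_monomial_0)

lemma reduce_var_add: "reduce_var tp i (f + g) = reduce_var tp i f + reduce_var tp i g"
  unfolding reduce_var_def
  by (rule extend_additive_add) (simp_all add: reduce_monomial_def single_add algebra_simps)

lemma reduce_var_0 [simp]: "reduce_var tp i 0 = 0"
  by (simp add: reduce_var_def)

lemma reduce_var_sum: "reduce_var tp i (sum F S) = (\<Sum>s\<in>S. reduce_var tp i (F s))"
  by (induction S rule: infinite_finite_induct) (auto simp: reduce_var_add)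

lemma reduce_var_mult_single_free:
  assumes "lookup \<delta> i = 0"
  shows "reduce_var tp i (f * single \<delta> y) = reduce_var tp i f * single \<delta> y"
proof (induction f rule: poly_mapping_induct)
  case (single \<beta> x)
  have "lookup (\<beta> + \<delta>) i = lookup \<beta> i" and "drop_var i (\<beta> + \<delta>) = drop_var i \<beta> + \<delta>"
    using assms by (simp_all add: lookup_add drop_var_add drop_var_free)
  moreover have "single 0 x * (A * single u 1) * single \<delta> y = single 0 (x * y) * (A * single (u + \<delta>) 1)"
    for A :: "'a mpoly" and u
  proof -
    have "single 0 x * (A * single u 1) * single \<delta> y = A * (single 0 x * single u 1 * single \<delta> y)"
      by (simp add: ac_simps)
    also have "single 0 x * single u 1 * single \<delta> y = single (u + \<delta>) (x * y)"
      by (simp add: mult_single)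
    also have "\<dots> = single 0 (x * y) * single (u + \<delta>) 1"
      by (simp add: mult_single)
    finally show ?thesis by (simp add: ac_simps)
  qed
  ultimately show ?case
    by (simp add: mult_single reduce_var_single reduce_monomial_def)
qed (simp_all add: distrib_right reduce_var_add)

lemma reduce_var_mult_free:
  assumes "\<And>\<delta>. \<delta> \<in> keys c \<Longrightarrow> lookup \<delta> i = 0"
  shows "reduce_var tp i (f * c) = reduce_var tp i f * c"
proof -
  have "reduce_var tp i (f * c) = reduce_var tp i (\<Sum>\<delta>\<in>keys c. f * single \<delta> (lookup c \<delta>))"
    by (subst poly_mapping_eq_sum_single[of c]) (simp add: sum_distrib_left)
  also have "\<dots> = (\<Sum>\<delta>\<in>keys c. reduce_var tp i f * single \<delta> (lookup c \<delta>))"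
    by (simp add: reduce_var_sum reduce_var_mult_single_free assms)
  also have "\<dots> = reduce_var tp i f * c"
    by (subst (2) poly_mapping_eq_sum_single[of c]) (simp add: sum_distrib_left)
  finally show ?thesis .
qed

context
  fixes tp :: "nat \<Rightarrow> 'a::comm_ring_1 poly" and i :: nat
  assumes monic: "lead_coeff (tp i) = 1"
begin

lemma monom_mult_pCons:
  "monom (1::'a) n * pCons d p = smult d (monom 1 n) + monom 1 (Suc n) * p"
proof (rule poly_eqI)
  fix k
  show "coeff (monom 1 n * pCons d p) k = coeff (smult d (monom 1 n) + monom 1 (Suc n) * p) k"
  proof (cases "n \<le> k")
    case True
    then obtain m where "k = n + m" using le_Suc_ex by blast
    then show ?thesis
      by (cases m) (auto simp: coeff_monom_mult coeff_pCons coeff_monom split: nat.split)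
  qed (auto simp: coeff_monom_mult coeff_monom coeff_pCons split: nat.split)
qed

lemma reduce_var_single_mult_embed_var:
  "reduce_var tp i (single \<gamma> c * embed_var i p) =
     single 0 c * (embed_var i (monic_rem (tp i) (monom 1 (lookup \<gamma> i) * p)) * single (drop_var i \<gamma>) 1)"
proof (induction p arbitrary: \<gamma> c)
  case 0
  then show ?case using monic_rem_reduced[OF monic, of 0] by (simp add: reduced_mod_def)
next
  case (pCons d p)
  let ?n = "lookup \<gamma> i" and ?U = "single (drop_var i \<gamma>) (1::'a)"
  have split: "single \<gamma> c * embed_var i (pCons d p) =
      single \<gamma> (c * d) + single (\<gamma> + single i 1) c * embed_var i p"
    by (simp add: embed_var_pCons mvar_def algebra_simps mult_single)
  have "lookup (\<gamma> + single i 1) i = Suc ?n" and "drop_var i (\<gamma> + single i 1) = drop_var i \<gamma>"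
    by (simp_all add: lookup_add drop_var_add drop_var_single)
  have "reduce_var tp i (single \<gamma> c * embed_var i (pCons d p)) =
      single 0 c * (single 0 d * embed_var i (monic_rem (tp i) (monom 1 ?n)) * ?U)
      + single 0 c * (embed_var i (monic_rem (tp i) (monom 1 (Suc ?n) * p)) * ?U)"
  proof -
    have "single 0 (c * d) = single 0 c * (single 0 d :: 'a mpoly)" by (simp add: mult_single)
    with \<open>lookup (\<gamma> + single i 1) i = Suc ?n\<close> \<open>drop_var i (\<gamma> + single i 1) = drop_var i \<gamma>\<close>
    show ?thesis
      unfolding split reduce_var_add reduce_var_single pCons.IH reduce_monomial_def
      by (simp only: ac_simps)
  qed
  also have "\<dots> = single 0 c * (embed_var i (monic_rem (tp i) (monom 1 ?n * pCons d p)) * ?U)"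
    by (simp only: monom_mult_pCons monic_rem_add[OF monic] monic_rem_smult[OF monic]
        embed_var_add embed_var_smult distrib_left distrib_right)
  finally show ?case .
qed

lemma reduce_var_mult_generator: "reduce_var tp i (w * embed_var i (tp i)) = 0"
proof (induction w rule: poly_mapping_induct)
  case (single \<beta> c)
  then show ?case
    using monic_rem_mult_self[OF monic, of "monom 1 (lookup \<beta> i)"]
    by (simp add: reduce_var_single_mult_embed_var mult.commute)
qed (simp_all add: distrib_right reduce_var_add)

lemma reduce_var_reduced:
  assumes "\<And>\<beta>. \<beta> \<in> keys f \<Longrightarrow> lookup \<beta> i < degree (tp i)"
  shows "reduce_var tp i f = f"
proof -
  have "reduce_var tp i (single \<beta> (lookup f \<beta>)) = single \<beta> (lookup f \<beta>)" if "\<beta> \<in> keys f" for \<beta>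
  proof -
    have "monic_rem (tp i) (monom 1 (lookup \<beta> i)) = monom 1 (lookup \<beta> i)"
      using assms[OF that] by (intro monic_rem_reduced[OF monic]) (simp add: reduced_mod_def degree_monom_eq)
    then show ?thesis
      using drop_var_add_single[of i \<beta>]
      by (simp add: reduce_var_single reduce_monomial_def embed_var_monom mult_single add.commute)
  qed
  then have "reduce_var tp i (\<Sum>\<beta>\<in>keys f. single \<beta> (lookup f \<beta>)) = (\<Sum>\<beta>\<in>keys f. single \<beta> (lookup f \<beta>))"
    by (simp add: reduce_var_sum)
  then show ?thesis by (simp flip: poly_mapping_eq_sum_single)
qed

lemma keys_reduce_var:
  assumes "\<delta> \<in> keys (reduce_var tp i f)"
  shows "\<exists>\<beta>\<in>keys f. (\<forall>l. l \<noteq> i \<longrightarrow> lookup \<delta> l = lookup \<beta> l) \<and> lookup \<delta> i < degree (tp i)"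
proof -
  obtain \<beta> where \<beta>: "\<beta> \<in> keys f" "\<delta> \<in> keys (reduce_monomial tp i \<beta> (lookup f \<beta>))"
    using assms keys_extend_additive[of "reduce_monomial tp i" f] unfolding reduce_var_def by blast
  let ?r = "monic_rem (tp i) (monom 1 (lookup \<beta> i))"
  have "\<delta> \<in> keys (embed_var i ?r * single (drop_var i \<beta>) 1)"
    using \<beta>(2) keys_single_0_mult unfolding reduce_monomial_def by blast
  then obtain u v where uv: "\<delta> = u + v" "u \<in> keys (embed_var i ?r)"
    "v \<in> keys (single (drop_var i \<beta>) (1::'a))"
    using keys_mult by blast
  from uv(2) obtain k where k: "u = single i k" "coeff ?r k \<noteq> 0"
    using keys_embed_var by blast
  have "k < degree (tp i)" by (rule coeff_reduced_mod[OF reduced_mod_monic_rem[OF monic] k(2)])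
  moreover have "v = drop_var i \<beta>" using uv(3) by (simp split: if_splits)
  ultimately show ?thesis using \<beta>(1) uv(1) k(1)
    by (intro bexI[of _ \<beta>]) (auto simp: lookup_add lookup_single lookup_drop_var)
qed

lemma reduce_var_congruent: "\<exists>h. f - reduce_var tp i f = h * embed_var i (tp i)"
proof (induction f rule: poly_mapping_induct)
  case (single \<beta> c)
  let ?n = "lookup \<beta> i" and ?U = "single (drop_var i \<beta>) (1::'a)"
  have s: "single \<beta> c = single 0 c * (embed_var i (monom 1 ?n) * ?U)"
    using drop_var_add_single[of i \<beta>] by (simp add: embed_var_monom mult_single add.commute)
  have d: "embed_var i (monom 1 ?n) = embed_var i (tp i) * embed_var i (monic_quot (tp i) (monom 1 ?n))
      + embed_var i (monic_rem (tp i) (monom 1 ?n))"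
    by (subst monic_div_mod[OF monic]) (simp add: embed_var_add embed_var_mult)
  have "single \<beta> c - reduce_var tp i (single \<beta> c) =
      (single 0 c * embed_var i (monic_quot (tp i) (monom 1 ?n)) * ?U) * embed_var i (tp i)"
    unfolding reduce_var_single reduce_monomial_def by (subst s, subst d) (simp add: algebra_simps)
  then show ?case by blast
next
  case (add p q)
  then obtain h1 h2 where "p - reduce_var tp i p = h1 * embed_var i (tp i)"
    and "q - reduce_var tp i q = h2 * embed_var i (tp i)" by blast
  then have "(p + q) - reduce_var tp i (p + q) = (h1 + h2) * embed_var i (tp i)"
    by (simp add: reduce_var_add algebra_simps)
  then show ?case by blast
qed (auto intro: exI[of _ 0])

end

section \<open>The variables outside \<open>X\<^sub>1, \<dots>, X\<^sub>r\<close>\<close>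

definition xmono :: "nat \<Rightarrow> (nat \<Rightarrow>\<^sub>0 nat) \<Rightarrow> bool" where
  "xmono r \<beta> \<longleftrightarrow> (\<forall>i. i \<notin> {1..r} \<longrightarrow> lookup \<beta> i = 0)"

definition ymono :: "nat \<Rightarrow> (nat \<Rightarrow>\<^sub>0 nat) \<Rightarrow> bool" where
  "ymono r \<alpha> \<longleftrightarrow> (\<forall>i\<in>{1..r}. lookup \<alpha> i = 0)"

definition xpoly :: "nat \<Rightarrow> 'a::zero mpoly \<Rightarrow> bool" where
  "xpoly r p \<longleftrightarrow> (\<forall>\<beta>\<in>keys p. xmono r \<beta>)"

definition xpart :: "nat \<Rightarrow> (nat \<Rightarrow>\<^sub>0 nat) \<Rightarrow> (nat \<Rightarrow>\<^sub>0 nat)" where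
  "xpart r \<beta> = (\<Sum>i\<in>keys \<beta> \<inter> {1..r}. single i (lookup \<beta> i))"

definition ypart :: "nat \<Rightarrow> (nat \<Rightarrow>\<^sub>0 nat) \<Rightarrow> (nat \<Rightarrow>\<^sub>0 nat)" where
  "ypart r \<beta> = (\<Sum>i\<in>keys \<beta> - {1..r}. single i (lookup \<beta> i))"

lemma lookup_xpart: "lookup (xpart r \<beta>) i = (if i \<in> {1..r} then lookup \<beta> i else 0)"
  unfolding xpart_def lookup_sum
  by (cases "i \<in> keys \<beta>") (auto simp: lookup_single when_def in_keys_iff)

lemma lookup_ypart: "lookup (ypart r \<beta>) i = (if i \<in> {1..r} then 0 else lookup \<beta> i)"
  unfolding ypart_def lookup_sum
  by (cases "i \<in> keys \<beta>") (auto simp: lookup_single when_def in_keys_iff)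

lemma xpart_add_ypart: "xpart r \<beta> + ypart r \<beta> = \<beta>"
  by (rule poly_mapping_eqI) (simp add: lookup_add lookup_xpart lookup_ypart)

lemma xpart_add: "xpart r (\<beta> + \<gamma>) = xpart r \<beta> + xpart r \<gamma>"
  by (rule poly_mapping_eqI) (simp add: lookup_add lookup_xpart)

lemma ypart_add: "ypart r (\<beta> + \<gamma>) = ypart r \<beta> + ypart r \<gamma>"
  by (rule poly_mapping_eqI) (simp add: lookup_add lookup_ypart)

lemma xpart_xmono: "xmono r \<beta> \<Longrightarrow> xpart r \<beta> = \<beta>"
  by (rule poly_mapping_eqI) (simp add: lookup_xpart xmono_def)

lemma ypart_xmono: "xmono r \<beta> \<Longrightarrow> ypart r \<beta> = 0"
  by (rule poly_mapping_eqI) (simp add: lookup_ypart xmono_def)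

lemma xpart_ymono: "ymono r \<beta> \<Longrightarrow> xpart r \<beta> = 0"
  by (rule poly_mapping_eqI) (simp add: lookup_xpart ymono_def)

lemma ypart_ymono: "ymono r \<beta> \<Longrightarrow> ypart r \<beta> = \<beta>"
  by (rule poly_mapping_eqI) (simp add: lookup_ypart ymono_def)

lemma xmono_xpart: "xmono r (xpart r \<beta>)"
  by (simp add: xmono_def lookup_xpart)

lemma ymono_ypart: "ymono r (ypart r \<beta>)"
  by (simp add: ymono_def lookup_ypart)

lemma ymono_add: "ymono r \<alpha> \<Longrightarrow> ymono r \<beta> \<Longrightarrow> ymono r (\<alpha> + \<beta>)"
  by (simp add: ymono_def lookup_add)

lemma xmono_add: "xmono r \<alpha> \<Longrightarrow> xmono r \<beta> \<Longrightarrow> xmono r (\<alpha> + \<beta>)"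
  by (simp add: xmono_def lookup_add)

lemma xpoly_0 [simp]: "xpoly r 0"
  by (simp add: xpoly_def)

lemma xpoly_1 [simp]: "xpoly r (1 :: 'a::comm_ring_1 mpoly)"
  by (simp add: xpoly_def xmono_def)

lemma xpoly_add: "xpoly r p \<Longrightarrow> xpoly r q \<Longrightarrow> xpoly r ((p :: 'a::comm_ring_1 mpoly) + q)"
  unfolding xpoly_def using keys_add[of p q] by blast

lemma xpoly_mult: "xpoly r p \<Longrightarrow> xpoly r q \<Longrightarrow> xpoly r ((p :: 'a::comm_ring_1 mpoly) * q)"
  unfolding xpoly_def
proof
  fix \<beta> assume "\<forall>\<beta>\<in>keys p. xmono r \<beta>" "\<forall>\<beta>\<in>keys q. xmono r \<beta>" "\<beta> \<in> keys (p * q)"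
  moreover obtain u v where "\<beta> = u + v" "u \<in> keys p" "v \<in> keys q"
    using keys_mult[of p q] \<open>\<beta> \<in> keys (p * q)\<close> by blast
  ultimately show "xmono r \<beta>" by (simp add: xmono_add)
qed

lemma xpoly_diff: "xpoly r p \<Longrightarrow> xpoly r q \<Longrightarrow> xpoly r ((p :: 'a::comm_ring_1 mpoly) - q)"
  unfolding xpoly_def using keys_diff[of p q] by blast

lemma xpoly_power: "xpoly r p \<Longrightarrow> xpoly r ((p :: 'a::comm_ring_1 mpoly) ^ n)"
  by (induction n) (auto intro: xpoly_mult)

lemma xpoly_embed_var: "i \<in> {1..r} \<Longrightarrow> xpoly r (embed_var i p)"
  using keys_embed_var[of i p] unfolding xpoly_def xmono_def by (force simp: lookup_single when_def)

lemma xpoly_if_keys_basis_monos: "keys p \<subseteq> basis_monos r tp \<Longrightarrow> xpoly r p"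
  unfolding xpoly_def xmono_def basis_monos_def by auto

lemma finite_basis_monos: "finite (basis_monos r tp)"
proof -
  let ?D = "\<Union>i\<in>{1..r}. {..<degree (tp i)}"
  have "lookup ` basis_monos r tp \<subseteq> {f. \<forall>x. (x \<in> {1..r} \<longrightarrow> f x \<in> ?D) \<and> (x \<notin> {1..r} \<longrightarrow> f x = 0)}"
    by (auto simp: basis_monos_def)
  moreover have "finite {f. \<forall>x. (x \<in> {1..r} \<longrightarrow> f x \<in> ?D) \<and> (x \<notin> {1..r} \<longrightarrow> f x = 0)}"
    by (rule finite_set_of_finite_funs) auto
  ultimately have "finite (lookup ` basis_monos r tp)" by (rule finite_subset)
  then show ?thesis by (rule finite_imageD) (simp add: inj_on_def lookup_inject)
qed

lemma finite_keys_subset: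
  assumes "finite S"
  shows "finite {p :: 'k \<Rightarrow>\<^sub>0 'a::{zero,finite}. keys p \<subseteq> S}"
proof -
  have "lookup ` {p :: 'k \<Rightarrow>\<^sub>0 'a. keys p \<subseteq> S} \<subseteq> {f. \<forall>x. (x \<in> S \<longrightarrow> f x \<in> UNIV) \<and> (x \<notin> S \<longrightarrow> f x = 0)}"
    by (auto simp: in_keys_iff)
  moreover have "finite {f. \<forall>x. (x \<in> S \<longrightarrow> f x \<in> (UNIV :: 'a set)) \<and> (x \<notin> S \<longrightarrow> f x = 0)}"
    by (rule finite_set_of_finite_funs) (use assms in auto)
  ultimately have "finite (lookup ` {p :: 'k \<Rightarrow>\<^sub>0 'a. keys p \<subseteq> S})" by (rule finite_subset)
  then show ?thesis by (rule finite_imageD) (simp add: inj_on_def lookup_inject)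
qed

text \<open>The formal polynomial ring has infinitely many variables, so modulo \<open>I\<close> it is the
  polynomial ring over the finite algebra \<open>A\<close> in the variables \<open>X\<^sub>i\<close>, \<open>i \<notin> {1..r}\<close>.
  \<open>ycoeff r p \<alpha>\<close> is the coefficient of the monomial \<open>\<alpha>\<close> in these variables, an element of \<open>A\<close>.\<close>

definition ycoeff :: "nat \<Rightarrow> 'a::comm_ring_1 mpoly \<Rightarrow> (nat \<Rightarrow>\<^sub>0 nat) \<Rightarrow> 'a mpoly" where
  "ycoeff r p \<alpha> = extend_additive (\<lambda>\<beta> c. if ypart r \<beta> = \<alpha> then single (xpart r \<beta>) c else 0) p"

definition ysupp :: "nat \<Rightarrow> 'a::zero mpoly \<Rightarrow> (nat \<Rightarrow>\<^sub>0 nat) set" where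
  "ysupp r p = ypart r ` keys p"

lemma finite_ysupp [simp]: "finite (ysupp r p)"
  by (simp add: ysupp_def)

lemma ycoeff_single: "ycoeff r (single \<beta> c) \<alpha> = (if ypart r \<beta> = \<alpha> then single (xpart r \<beta>) c else 0)"
  unfolding ycoeff_def by (rule extend_additive_single) simp

lemma ycoeff_add: "ycoeff r (p + q) \<alpha> = ycoeff r p \<alpha> + ycoeff r q \<alpha>"
  unfolding ycoeff_def by (rule extend_additive_add) (auto simp: single_add)

lemma ycoeff_0 [simp]: "ycoeff r 0 \<alpha> = 0"
  by (simp add: ycoeff_def)

lemma ycoeff_diff: "ycoeff r (p - q) \<alpha> = ycoeff r p \<alpha> - ycoeff r q \<alpha>"
  using ycoeff_add[of r "p - q" q \<alpha>] by (simp add: algebra_simps)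

lemma ycoeff_sum: "ycoeff r (sum f S) \<alpha> = (\<Sum>s\<in>S. ycoeff r (f s) \<alpha>)"
  by (induction S rule: infinite_finite_induct) (auto simp: ycoeff_add)

lemma xpoly_ycoeff: "xpoly r (ycoeff r p \<alpha>)"
proof -
  have "keys (ycoeff r p \<alpha>) \<subseteq>
      (\<Union>\<beta>\<in>keys p. keys (if ypart r \<beta> = \<alpha> then single (xpart r \<beta>) (lookup p \<beta>) else 0))"
    unfolding ycoeff_def by (rule keys_extend_additive)
  also have "\<dots> \<subseteq> {\<gamma>. xmono r \<gamma>}" by (auto simp: xmono_xpart split: if_splits)
  finally show ?thesis by (auto simp: xpoly_def)
qed

lemma ycoeff_mult_xpoly:
  assumes "xpoly r c"
  shows "ycoeff r (c * p) \<alpha> = c * ycoeff r p \<alpha>"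
proof -
  have single: "ycoeff r (single \<gamma> x * p) \<alpha> = single \<gamma> x * ycoeff r p \<alpha>" if "xmono r \<gamma>" for \<gamma> x
  proof (induction p rule: poly_mapping_induct)
    case (single \<beta> y)
    have "ypart r (\<gamma> + \<beta>) = ypart r \<beta>" and "xpart r (\<gamma> + \<beta>) = \<gamma> + xpart r \<beta>"
      using that by (simp_all add: ypart_add xpart_add ypart_xmono xpart_xmono)
    then show ?case by (simp add: mult_single ycoeff_single)
  qed (simp_all add: distrib_left ycoeff_add)
  have "ycoeff r (c * p) \<alpha> = ycoeff r (\<Sum>\<gamma>\<in>keys c. single \<gamma> (lookup c \<gamma>) * p) \<alpha>"
    by (subst poly_mapping_eq_sum_single[of c]) (simp add: sum_distrib_right)
  also have "\<dots> = (\<Sum>\<gamma>\<in>keys c. single \<gamma> (lookup c \<gamma>) * ycoeff r p \<alpha>)"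
    using assms by (simp add: ycoeff_sum single xpoly_def)
  also have "\<dots> = c * ycoeff r p \<alpha>"
    by (subst (2) poly_mapping_eq_sum_single[of c]) (simp add: sum_distrib_right)
  finally show ?thesis .
qed

lemma ycoeff_xpoly:
  assumes "xpoly r c"
  shows "ycoeff r c \<alpha> = (if \<alpha> = 0 then c else 0)"
proof -
  have "ycoeff r c \<alpha> = (\<Sum>\<beta>\<in>keys c. if \<alpha> = 0 then single \<beta> (lookup c \<beta>) else 0)"
    unfolding ycoeff_def extend_additive_def using assms
    by (intro sum.cong refl) (auto simp: xpoly_def xpart_xmono ypart_xmono)
  then show ?thesis by (cases "\<alpha> = 0") (simp_all flip: poly_mapping_eq_sum_single)
qed

lemma ymono_if_in_ysupp: "\<alpha> \<in> ysupp r p \<Longrightarrow> ymono r \<alpha>"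
  by (auto simp: ysupp_def ymono_ypart)

lemma ycoeff_eq_0_if_not_in_ysupp: "\<alpha> \<notin> ysupp r p \<Longrightarrow> ycoeff r p \<alpha> = 0"
  unfolding ycoeff_def extend_additive_def ysupp_def by (rule sum.neutral) auto

lemma poly_mapping_eq_sum_ycoeff: "p = (\<Sum>\<alpha>\<in>ysupp r p. ycoeff r p \<alpha> * single \<alpha> 1)"
proof -
  have "(\<Sum>\<alpha>\<in>ysupp r p. ycoeff r p \<alpha> * single \<alpha> 1) =
      (\<Sum>\<alpha>\<in>ysupp r p. \<Sum>\<beta>\<in>keys p. if ypart r \<beta> = \<alpha> then single (xpart r \<beta> + \<alpha>) (lookup p \<beta>) else 0)"
    unfolding ycoeff_def extend_additive_def sum_distrib_right
    by (intro sum.cong refl) (simp add: mult_single)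
  also have "\<dots> = (\<Sum>\<beta>\<in>keys p. \<Sum>\<alpha>\<in>ysupp r p. if ypart r \<beta> = \<alpha> then single (xpart r \<beta> + \<alpha>) (lookup p \<beta>) else 0)"
    by (rule sum.swap)
  also have "\<dots> = (\<Sum>\<beta>\<in>keys p. single \<beta> (lookup p \<beta>))"
    by (intro sum.cong refl) (simp add: ysupp_def sum.delta xpart_add_ypart)
  finally show ?thesis by (simp flip: poly_mapping_eq_sum_single)
qed

lemma ycoeff_mult:
  "ycoeff r (p * q) \<alpha> =
    (\<Sum>\<alpha>1\<in>ysupp r p. \<Sum>\<alpha>2\<in>ysupp r q. if \<alpha>1 + \<alpha>2 = \<alpha> then ycoeff r p \<alpha>1 * ycoeff r q \<alpha>2 else 0)"
proof -
  have "p * q = (\<Sum>\<alpha>1\<in>ysupp r p. ycoeff r p \<alpha>1 * single \<alpha>1 1) * (\<Sum>\<alpha>2\<in>ysupp r q. ycoeff r q \<alpha>2 * single \<alpha>2 1)"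
    using poly_mapping_eq_sum_ycoeff[of p r] poly_mapping_eq_sum_ycoeff[of q r] by simp
  also have "\<dots> = (\<Sum>\<alpha>1\<in>ysupp r p. \<Sum>\<alpha>2\<in>ysupp r q. (ycoeff r p \<alpha>1 * ycoeff r q \<alpha>2) * single (\<alpha>1 + \<alpha>2) 1)"
    unfolding sum_product
  proof (intro sum.cong refl)
    fix \<alpha>1 \<alpha>2
    have "ycoeff r p \<alpha>1 * single \<alpha>1 1 * (ycoeff r q \<alpha>2 * single \<alpha>2 1) =
        ycoeff r p \<alpha>1 * ycoeff r q \<alpha>2 * (single \<alpha>1 1 * single \<alpha>2 1)"
      by (simp only: ac_simps)
    then show "ycoeff r p \<alpha>1 * single \<alpha>1 1 * (ycoeff r q \<alpha>2 * single \<alpha>2 1) =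
        ycoeff r p \<alpha>1 * ycoeff r q \<alpha>2 * single (\<alpha>1 + \<alpha>2) 1"
      by (simp add: mult_single)
  qed
  finally have pq: "p * q = (\<Sum>\<alpha>1\<in>ysupp r p. \<Sum>\<alpha>2\<in>ysupp r q.
      (ycoeff r p \<alpha>1 * ycoeff r q \<alpha>2) * single (\<alpha>1 + \<alpha>2) 1)" .
  have "ycoeff r ((ycoeff r p \<alpha>1 * ycoeff r q \<alpha>2) * single (\<alpha>1 + \<alpha>2) 1) \<alpha> =
      (if \<alpha>1 + \<alpha>2 = \<alpha> then ycoeff r p \<alpha>1 * ycoeff r q \<alpha>2 else 0)"
    if "\<alpha>1 \<in> ysupp r p" "\<alpha>2 \<in> ysupp r q" for \<alpha>1 \<alpha>2
  proof -
    have "ymono r (\<alpha>1 + \<alpha>2)" using that by (intro ymono_add ymono_if_in_ysupp)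
    then have x: "xpart r (\<alpha>1 + \<alpha>2) = 0" "ypart r (\<alpha>1 + \<alpha>2) = \<alpha>1 + \<alpha>2"
      by (simp_all add: xpart_ymono ypart_ymono)
    show ?thesis
    proof (cases "\<alpha>1 + \<alpha>2 = \<alpha>")
      case True
      then show ?thesis
        unfolding True[symmetric] using x by (simp add: ycoeff_mult_xpoly xpoly_mult xpoly_ycoeff ycoeff_single)
    qed (use x in \<open>simp add: ycoeff_mult_xpoly xpoly_mult xpoly_ycoeff ycoeff_single\<close>)
  qed
  then show ?thesis by (subst pq) (simp add: ycoeff_sum)
qed

section \<open>Normal forms modulo \<open>I\<close>\<close>

locale monic_generated =
  fixes r :: nat and tp :: "nat \<Rightarrow> 'a::comm_ring_1 poly" and I :: "'a mpoly set"
  assumes monic: "\<And>i. i \<in> {1..r} \<Longrightarrow> lead_coeff (tp i) = 1"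
    and I_def: "I = gen_ideal ((\<lambda>i. embed_var i (tp i)) ` {1..r})"
begin

lemma is_ideal_I: "is_ideal I"
  unfolding I_def by (rule is_ideal_gen_ideal)

lemma generator_in_I: "i \<in> {1..r} \<Longrightarrow> embed_var i (tp i) \<in> I"
  unfolding I_def by (rule subsetD[OF gen_ideal_superset]) (rule imageI)

lemma mult_left_in_I: "p \<in> I \<Longrightarrow> c * p \<in> I"
  by (rule is_ideal_mult_left[OF is_ideal_I])

lemma mult_right_in_I: "p \<in> I \<Longrightarrow> p * c \<in> I"
  by (rule is_ideal_mult_right[OF is_ideal_I])

definition combinations :: "nat \<Rightarrow> 'a mpoly set" where
  "combinations k = {\<Sum>j\<in>{1..k}. h j * embed_var j (tp j) | h. True}"

lemma I_subset_combinations: "I \<subseteq> combinations r"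
  unfolding I_def
proof (rule gen_ideal_minimal)
  show "is_ideal (combinations r)"
    unfolding is_ideal_def combinations_def
  proof (intro conjI ballI allI)
    show "0 \<in> {\<Sum>j\<in>{1..r}. h j * embed_var j (tp j) | h. True}"
      by (auto intro: exI[of _ "\<lambda>_. 0"])
  next
    fix x y assume "x \<in> {\<Sum>j\<in>{1..r}. h j * embed_var j (tp j) | h. True}"
      and "y \<in> {\<Sum>j\<in>{1..r}. h j * embed_var j (tp j) | h. True}"
    then obtain h1 h2 where "x = (\<Sum>j\<in>{1..r}. h1 j * embed_var j (tp j))"
      and "y = (\<Sum>j\<in>{1..r}. h2 j * embed_var j (tp j))" by auto
    then show "x + y \<in> {\<Sum>j\<in>{1..r}. h j * embed_var j (tp j) | h. True}"
      by (auto simp: sum.distrib distrib_right intro!: exI[of _ "\<lambda>j. h1 j + h2 j"])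
  next
    fix x s assume "x \<in> {\<Sum>j\<in>{1..r}. h j * embed_var j (tp j) | h. True}"
    then obtain h where "x = (\<Sum>j\<in>{1..r}. h j * embed_var j (tp j))" by auto
    then show "s * x \<in> {\<Sum>j\<in>{1..r}. h j * embed_var j (tp j) | h. True}"
      by (auto simp: sum_distrib_left mult.assoc intro!: exI[of _ "\<lambda>j. s * h j"])
  qed
  show "(\<lambda>i. embed_var i (tp i)) ` {1..r} \<subseteq> combinations r"
  proof safe
    fix i assume "i \<in> {1..r}"
    have "(\<Sum>j\<in>{1..r}. (if j = i then 1 else 0) * embed_var j (tp j)) =
        (\<Sum>j\<in>{1..r}. if j = i then embed_var j (tp j) else 0)"
      by (rule sum.cong) auto
    also have "\<dots> = embed_var i (tp i)" using \<open>i \<in> {1..r}\<close> by (simp add: sum.delta)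
    finally have e: "embed_var i (tp i) = (\<Sum>j\<in>{1..r}. (if j = i then 1 else 0) * embed_var j (tp j))" ..
    show "embed_var i (tp i) \<in> combinations r"
      unfolding combinations_def mem_Collect_eq by (rule exI[of _ "\<lambda>j. if j = i then 1 else 0"]) (simp add: e)
  qed
qed

text \<open>Reducing in \<open>X\<^sub>k\<close> kills the \<open>k\<close>-th summand and commutes with the others.\<close>

lemma combination_reduced_eq_0:
  "k \<le> r \<Longrightarrow> p \<in> combinations k \<Longrightarrow> (\<forall>\<beta>\<in>keys p. \<forall>j\<in>{1..k}. lookup \<beta> j < degree (tp j)) \<Longrightarrow> p = 0"
proof (induction k arbitrary: p)
  case 0
  then show ?case by (simp add: combinations_def)
next
  case (Suc k)
  from Suc.prems(2) obtain h where p: "p = (\<Sum>j\<in>{1..Suc k}. h j * embed_var j (tp j))"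
    unfolding combinations_def by auto
  have monic_k: "lead_coeff (tp (Suc k)) = 1" using monic Suc.prems(1) by simp
  have free: "reduce_var tp (Suc k) (h j * embed_var j (tp j)) =
      reduce_var tp (Suc k) (h j) * embed_var j (tp j)" if "j \<in> {1..k}" for j
    using that keys_embed_var[of j "tp j"]
    by (intro reduce_var_mult_free) (auto simp: lookup_single when_def)
  have "p = reduce_var tp (Suc k) p"
    using Suc.prems(3) by (intro reduce_var_reduced[of tp "Suc k", OF monic_k, symmetric]) auto
  also have "\<dots> = (\<Sum>j\<in>{1..k}. reduce_var tp (Suc k) (h j) * embed_var j (tp j))"
    unfolding p by (simp add: atLeastAtMostSuc_conv reduce_var_add reduce_var_sum free
        reduce_var_mult_generator[of tp "Suc k", OF monic_k])
  finally have p_eq: "p = (\<Sum>j\<in>{1..k}. reduce_var tp (Suc k) (h j) * embed_var j (tp j))" .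
  have "p \<in> combinations k"
    unfolding combinations_def mem_Collect_eq
    by (rule exI[of _ "\<lambda>j. reduce_var tp (Suc k) (h j)"]) (simp add: p_eq)
  with Suc show ?case by auto
qed

lemma reduced_in_I_eq_0: "p \<in> I \<Longrightarrow> keys p \<subseteq> basis_monos r tp \<Longrightarrow> p = 0"
  using combination_reduced_eq_0[of r p] I_subset_combinations
  by (auto simp: basis_monos_def subset_iff)

primrec reduce_upto :: "nat \<Rightarrow> 'a mpoly \<Rightarrow> 'a mpoly" where
  "reduce_upto 0 f = f"
| "reduce_upto (Suc k) f = reduce_var tp (Suc k) (reduce_upto k f)"

lemma reduce_upto_congruent: "k \<le> r \<Longrightarrow> f - reduce_upto k f \<in> I"
proof (induction k)
  case 0
  then show ?case using is_ideal_0[OF is_ideal_I] by simp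
next
  case (Suc k)
  obtain h where h: "reduce_upto k f - reduce_upto (Suc k) f = h * embed_var (Suc k) (tp (Suc k))"
    using reduce_var_congruent[of tp "Suc k"] monic[of "Suc k"] Suc.prems by auto
  have "f - reduce_upto (Suc k) f = (f - reduce_upto k f) + (reduce_upto k f - reduce_upto (Suc k) f)"
    by (simp add: algebra_simps)
  also have "\<dots> \<in> I"
    unfolding h using Suc by (intro is_ideal_add[OF is_ideal_I] mult_left_in_I generator_in_I) auto
  finally show ?case .
qed

lemma keys_reduce_upto:
  "k \<le> r \<Longrightarrow> xpoly r f \<Longrightarrow> \<beta> \<in> keys (reduce_upto k f) \<Longrightarrow>
     xmono r \<beta> \<and> (\<forall>j\<in>{1..k}. lookup \<beta> j < degree (tp j))"
proof (induction k arbitrary: \<beta>)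
  case 0
  then show ?case by (simp add: xpoly_def)
next
  case (Suc k)
  have monic_k: "lead_coeff (tp (Suc k)) = 1" using monic Suc.prems(1) by simp
  obtain \<gamma> where \<gamma>: "\<gamma> \<in> keys (reduce_upto k f)" "\<forall>l. l \<noteq> Suc k \<longrightarrow> lookup \<beta> l = lookup \<gamma> l"
    "lookup \<beta> (Suc k) < degree (tp (Suc k))"
    using keys_reduce_var[of tp "Suc k", OF monic_k, of \<beta> "reduce_upto k f"] Suc.prems(3) by auto
  have IH: "xmono r \<gamma>" "\<forall>j\<in>{1..k}. lookup \<gamma> j < degree (tp j)"
    using Suc.IH[OF _ Suc.prems(2) \<gamma>(1)] Suc.prems(1) by auto
  show ?case
  proof
    show "xmono r \<beta>" using IH(1) \<gamma>(2) Suc.prems(1) by (auto simp: xmono_def)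
    show "\<forall>j\<in>{1..Suc k}. lookup \<beta> j < degree (tp j)"
      using IH(2) \<gamma>(2,3) by (auto simp: le_Suc_eq)
  qed
qed

definition normal_form :: "'a mpoly \<Rightarrow> 'a mpoly" where
  "normal_form f = reduce_upto r f"

lemma normal_form_congruent: "f - normal_form f \<in> I"
  unfolding normal_form_def by (rule reduce_upto_congruent) simp

lemma keys_normal_form: "xpoly r f \<Longrightarrow> keys (normal_form f) \<subseteq> basis_monos r tp"
  using keys_reduce_upto[of r f] by (auto simp: normal_form_def basis_monos_def xmono_def)

lemma ycoeff_in_I: "p \<in> I \<Longrightarrow> ycoeff r p \<alpha> \<in> I"
proof -
  let ?S = "{p. \<forall>\<alpha>. ycoeff r p \<alpha> \<in> I}"
  have "is_ideal ?S"
    unfolding is_ideal_def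
  proof (intro conjI ballI allI)
    show "0 \<in> ?S" by (simp add: is_ideal_0[OF is_ideal_I])
  next
    fix x y assume "x \<in> ?S" "y \<in> ?S"
    then show "x + y \<in> ?S" by (simp add: ycoeff_add is_ideal_add[OF is_ideal_I])
  next
    fix x h assume "x \<in> ?S"
    then show "h * x \<in> ?S"
      by (auto simp: ycoeff_mult mult_left_in_I is_ideal_0[OF is_ideal_I] intro!: is_ideal_sum[OF is_ideal_I])
  qed
  moreover have "(\<lambda>i. embed_var i (tp i)) ` {1..r} \<subseteq> ?S"
    using generator_in_I is_ideal_0[OF is_ideal_I] by (auto simp: ycoeff_xpoly xpoly_embed_var)
  ultimately have "I \<subseteq> ?S" unfolding I_def by (rule gen_ideal_minimal)
  then show "p \<in> I \<Longrightarrow> ycoeff r p \<alpha> \<in> I" by auto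
qed

lemma in_I_if_ycoeff_in_I:
  assumes "\<And>\<alpha>. \<alpha> \<in> ysupp r p \<Longrightarrow> ycoeff r p \<alpha> \<in> I"
  shows "p \<in> I"
proof -
  have "(\<Sum>\<alpha>\<in>ysupp r p. ycoeff r p \<alpha> * single \<alpha> 1) \<in> I"
    using assms by (intro is_ideal_sum[OF is_ideal_I] mult_right_in_I)
  then show ?thesis by (simp only: poly_mapping_eq_sum_ycoeff[of p r, symmetric])
qed

end

section \<open>Idempotents and nilpotents modulo \<open>I\<close>\<close>

context monic_generated
begin

definition eqv :: "'a mpoly \<Rightarrow> 'a mpoly \<Rightarrow> bool" (infix "\<approx>" 50) where
  "p \<approx> q \<longleftrightarrow> p - q \<in> I"

lemma eqv_refl [simp, intro]: "p \<approx> p"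
  by (simp add: eqv_def is_ideal_0[OF is_ideal_I])

lemma eqv_sym: "p \<approx> q \<Longrightarrow> q \<approx> p"
  unfolding eqv_def using is_ideal_uminus[OF is_ideal_I, of "p - q"] by simp

lemma eqv_trans [trans]: "p \<approx> q \<Longrightarrow> q \<approx> s \<Longrightarrow> p \<approx> s"
  unfolding eqv_def using is_ideal_add[OF is_ideal_I, of "p - q" "q - s"] by simp

lemma eqv_add: "p \<approx> q \<Longrightarrow> p' \<approx> q' \<Longrightarrow> p + p' \<approx> q + q'"
  unfolding eqv_def using is_ideal_add[OF is_ideal_I, of "p - q" "p' - q'"] by (simp add: algebra_simps)

lemma eqv_diff: "p \<approx> q \<Longrightarrow> p' \<approx> q' \<Longrightarrow> p - p' \<approx> q - q'"
  unfolding eqv_def using is_ideal_diff[OF is_ideal_I, of "p - q" "p' - q'"] by (simp add: algebra_simps)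

lemma eqv_mult_left: "p \<approx> q \<Longrightarrow> c * p \<approx> c * q"
  unfolding eqv_def using mult_left_in_I[of "p - q" c] by (simp add: algebra_simps)

lemma eqv_mult_right: "p \<approx> q \<Longrightarrow> p * c \<approx> q * c"
  using eqv_mult_left[of p q c] by (simp add: mult.commute)

lemma eqv_mult: "p \<approx> q \<Longrightarrow> p' \<approx> q' \<Longrightarrow> p * p' \<approx> q * q'"
  using eqv_mult_right[of p q p'] eqv_mult_left[of p' q' q] eqv_trans by blast

lemma eqv_sum: "(\<And>i. i \<in> S \<Longrightarrow> f i \<approx> g i) \<Longrightarrow> sum f S \<approx> sum g S"
  by (induction S rule: infinite_finite_induct) (auto intro: eqv_add)

lemma eqv_0_iff: "p \<approx> 0 \<longleftrightarrow> p \<in> I"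
  by (simp add: eqv_def)

lemma eqv_in_I: "p \<approx> q \<Longrightarrow> q \<in> I \<Longrightarrow> p \<in> I"
  using eqv_0_iff eqv_trans by blast

lemma eqv_normal_form: "normal_form f \<approx> f"
  using eqv_sym[of f "normal_form f"] normal_form_congruent[of f] by (simp add: eqv_def)

lemma eqv_reduced_eq:
  "p \<approx> q \<Longrightarrow> keys p \<subseteq> basis_monos r tp \<Longrightarrow> keys q \<subseteq> basis_monos r tp \<Longrightarrow> p = q"
  using reduced_in_I_eq_0[of "p - q"] keys_diff[of p q] by (auto simp: eqv_def)

definition idempotent :: "'a mpoly \<Rightarrow> bool" where
  "idempotent u \<longleftrightarrow> xpoly r u \<and> u * u \<approx> u"

definition nilpotent :: "'a mpoly \<Rightarrow> bool" where
  "nilpotent s \<longleftrightarrow> (\<exists>n. s ^ n \<in> I)"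

definition primitive :: "'a mpoly \<Rightarrow> bool" where
  "primitive u \<longleftrightarrow> (\<forall>w. xpoly r w \<and> w * w \<approx> w \<and> w * u \<approx> w \<longrightarrow> w \<in> I \<or> w \<approx> u)"

lemma idempotent_union: "idempotent e1 \<Longrightarrow> idempotent e2 \<Longrightarrow> idempotent (e1 + e2 - e1 * e2)"
proof -
  assume e1: "idempotent e1" and e2: "idempotent e2"
  have "(e1 + e2 - e1 * e2) * (e1 + e2 - e1 * e2) - (e1 + e2 - e1 * e2) =
      (e1 * e1 - e1) * ((1 - e2) * (1 - e2)) + (1 - e1) * (e2 * e2 - e2)"
    by (simp add: algebra_simps)
  also have "\<dots> \<in> I"
    using e1 e2 by (intro is_ideal_add[OF is_ideal_I] mult_left_in_I mult_right_in_I)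
      (simp_all add: idempotent_def eqv_def)
  finally show ?thesis
    using e1 e2 by (simp add: idempotent_def eqv_def xpoly_add xpoly_diff xpoly_mult)
qed

lemma idempotent_complement:
  assumes u: "idempotent u" and w: "idempotent w" "w * u \<approx> w"
  shows "idempotent (u - w)" and "(u - w) * u \<approx> u - w"
proof -
  have uu: "u * u \<approx> u" and ww: "w * w \<approx> w" using u w(1) by (auto simp: idempotent_def)
  have uw: "u * w \<approx> w" using w(2) by (simp add: mult.commute)
  have "(u - w) * (u - w) = u * u - u * w - w * u + w * w" by (simp add: algebra_simps)
  also have "\<dots> \<approx> u - w - w + w" by (intro eqv_add eqv_diff uu uw w(2) ww)
  finally show "idempotent (u - w)" using u w(1) by (simp add: idempotent_def xpoly_diff)
  show "(u - w) * u \<approx> u - w" using eqv_diff[OF uu w(2)] by (simp add: algebra_simps)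
qed

lemma idempotent_union_fixes:
  assumes "e1 * (w * m) \<approx> w * m" and "e2 * ((u - w) * m) \<approx> (u - w) * m" and "u * m \<approx> m"
  shows "(e1 + e2 - e1 * e2) * m \<approx> m"
proof -
  define e where "e = e1 + e2 - e1 * e2"
  have "e * (w * m) - w * m = (1 - e2) * (e1 * (w * m) - w * m)"
    and "e * ((u - w) * m) - (u - w) * m = (1 - e1) * (e2 * ((u - w) * m) - (u - w) * m)"
    by (simp_all add: e_def algebra_simps)
  then have "e * (w * m) \<approx> w * m" and "e * ((u - w) * m) \<approx> (u - w) * m"
    using assms(1,2) by (simp_all add: eqv_def mult_left_in_I)
  then have "e * (w * m) + e * ((u - w) * m) \<approx> w * m + (u - w) * m" by (rule eqv_add)
  then have eum: "e * (u * m) \<approx> u * m" by (simp add: algebra_simps)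
  have "e * m \<approx> e * (u * m)" by (rule eqv_sym[OF eqv_mult_left[OF assms(3)]])
  also note eum
  also note assms(3)
  finally show ?thesis by (simp add: e_def)
qed

lemma idempotent_mult_eqv: "u * u \<approx> u \<Longrightarrow> u * (u * x) \<approx> u * x"
  using eqv_mult_right[of "u * u" u x] by (simp add: mult.assoc)

lemma power_in_I_mono: "s ^ n \<in> I \<Longrightarrow> n \<le> k \<Longrightarrow> s ^ k \<in> I"
  using mult_right_in_I[of "s ^ n" "s ^ (k - n)"] by (simp flip: power_add)

lemma nilpotent_add:
  assumes "nilpotent p" and "nilpotent q"
  shows "nilpotent (p + q)"
proof -
  obtain n m where n: "p ^ n \<in> I" and m: "q ^ m \<in> I"
    using assms by (auto simp: nilpotent_def)
  have "(p + q) ^ (n + m) = (\<Sum>k\<le>n + m. of_nat ((n + m) choose k) * p ^ k * q ^ (n + m - k))"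
    by (rule binomial_ring)
  also have "\<dots> \<in> I"
  proof (rule is_ideal_sum[OF is_ideal_I])
    fix k assume "k \<in> {..n + m}"
    then have "p ^ k \<in> I \<or> q ^ (n + m - k) \<in> I"
      using power_in_I_mono[OF n, of k] power_in_I_mono[OF m, of "n + m - k"] by (cases "n \<le> k") auto
    then show "of_nat ((n + m) choose k) * p ^ k * q ^ (n + m - k) \<in> I"
    proof
      assume "p ^ k \<in> I"
      then show ?thesis by (intro mult_right_in_I mult_left_in_I)
    next
      assume "q ^ (n + m - k) \<in> I"
      then show ?thesis by (rule mult_left_in_I)
    qed
  qed
  finally show ?thesis unfolding nilpotent_def by blast
qed

lemma nilpotent_0: "nilpotent 0"
  using is_ideal_0[OF is_ideal_I] by (auto simp: nilpotent_def intro: exI[of _ 1])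

lemma nilpotent_sum: "(\<And>i. i \<in> S \<Longrightarrow> nilpotent (f i)) \<Longrightarrow> nilpotent (sum f S)"
  by (induction S rule: infinite_finite_induct) (auto intro: nilpotent_add nilpotent_0)

lemma nilpotent_mult: "nilpotent s \<Longrightarrow> nilpotent (s * c)"
  unfolding nilpotent_def by (auto simp: power_mult_distrib intro: mult_right_in_I)

text \<open>For each nilpotent \<open>t\<close> in turn, multiply by the largest power of \<open>t\<close> that keeps \<open>z c w\<close>
  outside \<open>I\<close>.\<close>

lemma annihilate_nilpotents:
  assumes "finite T" and "\<And>t. t \<in> T \<Longrightarrow> xpoly r t \<and> nilpotent t" and "xpoly r z" and "z * w \<notin> I"
  shows "\<exists>c. xpoly r c \<and> z * c * w \<notin> I \<and> (\<forall>t\<in>T. z * c * t * w \<in> I)"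
  using assms
proof (induction T rule: finite_induct)
  case empty
  then show ?case by (auto intro: exI[of _ 1])
next
  case (insert t T)
  then obtain c where c: "xpoly r c" "z * c * w \<notin> I" "\<forall>t'\<in>T. z * c * t' * w \<in> I" by auto
  from insert.prems(1) obtain N where N: "t ^ N \<in> I" and t: "xpoly r t" by (auto simp: nilpotent_def)
  let ?S = "{k. z * c * t ^ k * w \<notin> I}"
  have "?S \<subseteq> {..N}"
  proof
    fix k assume "k \<in> ?S"
    show "k \<in> {..N}"
    proof (rule ccontr)
      assume "k \<notin> {..N}"
      then have "t ^ k \<in> I" using power_in_I_mono[OF N, of k] by simp
      then have "z * c * t ^ k * w \<in> I" by (simp add: mult_left_in_I mult_right_in_I mult.assoc)
      with \<open>k \<in> ?S\<close> show False by simp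
    qed
  qed
  then have fin: "finite ?S" by (rule finite_subset) simp
  have "0 \<in> ?S" using c by simp
  define k where "k = Max ?S"
  have "?S \<noteq> {}" using \<open>0 \<in> ?S\<close> by blast
  with fin have kS: "k \<in> ?S" unfolding k_def by (rule Max_in)
  have "Suc k \<notin> ?S" using Max_ge[OF fin, of "Suc k"] by (auto simp: k_def)
  then have tk: "z * c * t ^ Suc k * w \<in> I" by simp
  show ?case
  proof (intro exI conjI ballI)
    show "xpoly r (c * t ^ k)" using c(1) t by (intro xpoly_mult xpoly_power)
    show "z * (c * t ^ k) * w \<notin> I" using kS by (simp add: mult.assoc)
    fix t' assume "t' \<in> insert t T"
    then show "z * (c * t ^ k) * t' * w \<in> I"
    proof
      assume "t' = t"
      then show ?thesis using tk by (simp add: ac_simps)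
    next
      assume "t' \<in> T"
      then have "t ^ k * (z * c * t' * w) \<in> I" using c(3) mult_left_in_I by blast
      then show ?thesis by (simp add: ac_simps)
    qed
  qed
qed

lemma ycoeff_mult_leading:
  assumes z: "xpoly r z" and \<mu>: "\<mu> \<in> ysupp r g" and \<nu>: "\<nu> \<in> ysupp r F"
    and above_\<mu>: "\<And>\<alpha>. \<alpha> \<in> ysupp r g \<Longrightarrow> \<mu> < \<alpha> \<Longrightarrow> z * ycoeff r g \<alpha> * F \<in> I"
    and above_\<nu>: "\<And>\<beta>. \<beta> \<in> ysupp r F \<Longrightarrow> \<nu> < \<beta> \<Longrightarrow> z * ycoeff r F \<beta> \<in> I"
  shows "ycoeff r (z * (g * F)) (\<mu> + \<nu>) \<approx> z * ycoeff r g \<mu> * ycoeff r F \<nu>"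
proof -
  let ?c = "\<lambda>\<alpha>1 \<alpha>2. z * ycoeff r g \<alpha>1 * ycoeff r F \<alpha>2"
  have "ycoeff r (z * (g * F)) (\<mu> + \<nu>) = z * ycoeff r (g * F) (\<mu> + \<nu>)"
    by (rule ycoeff_mult_xpoly[OF z])
  also have "ycoeff r (g * F) (\<mu> + \<nu>) = (\<Sum>\<alpha>1\<in>ysupp r g. \<Sum>\<alpha>2\<in>ysupp r F.
      if \<alpha>1 + \<alpha>2 = \<mu> + \<nu> then ycoeff r g \<alpha>1 * ycoeff r F \<alpha>2 else 0)"
    by (rule ycoeff_mult)
  also have "z * \<dots> =
      (\<Sum>\<alpha>1\<in>ysupp r g. \<Sum>\<alpha>2\<in>ysupp r F. if \<alpha>1 + \<alpha>2 = \<mu> + \<nu> then ?c \<alpha>1 \<alpha>2 else 0)"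
    unfolding sum_distrib_left by (intro sum.cong refl) (simp add: mult.assoc)
  also have "\<dots> \<approx> (\<Sum>\<alpha>1\<in>ysupp r g. \<Sum>\<alpha>2\<in>ysupp r F. if (\<alpha>1, \<alpha>2) = (\<mu>, \<nu>) then ?c \<alpha>1 \<alpha>2 else 0)"
  proof (intro eqv_sum)
    fix \<alpha>1 \<alpha>2 assume \<alpha>1: "\<alpha>1 \<in> ysupp r g" and \<alpha>2: "\<alpha>2 \<in> ysupp r F"
    have "?c \<alpha>1 \<alpha>2 \<in> I" if "\<alpha>1 + \<alpha>2 = \<mu> + \<nu>" "(\<alpha>1, \<alpha>2) \<noteq> (\<mu>, \<nu>)"
    proof (cases "\<mu> < \<alpha>1")
      case True
      then have "ycoeff r (z * ycoeff r g \<alpha>1 * F) \<alpha>2 \<in> I"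
        using above_\<mu>[OF \<alpha>1] by (intro ycoeff_in_I)
      then show ?thesis using z by (simp add: ycoeff_mult_xpoly xpoly_mult xpoly_ycoeff)
    next
      case False
      have "\<alpha>1 \<noteq> \<mu>" using that by auto
      with False have "\<alpha>1 < \<mu>" by (simp add: not_less order_le_less)
      have "\<nu> < \<alpha>2"
      proof (rule ccontr)
        assume "\<not> \<nu> < \<alpha>2"
        then have "\<alpha>1 + \<alpha>2 < \<mu> + \<nu>" using \<open>\<alpha>1 < \<mu>\<close> by (simp add: add_less_le_mono)
        with that(1) show False by simp
      qed
      then have "ycoeff r g \<alpha>1 * (z * ycoeff r F \<alpha>2) \<in> I" by (intro mult_left_in_I above_\<nu>[OF \<alpha>2])
      then show ?thesis by (simp add: ac_simps)
    qed
    then show "(if \<alpha>1 + \<alpha>2 = \<mu> + \<nu> then ?c \<alpha>1 \<alpha>2 else 0) \<approx> (if (\<alpha>1, \<alpha>2) = (\<mu>, \<nu>) then ?c \<alpha>1 \<alpha>2 else 0)"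
      by (auto simp: eqv_def is_ideal_0[OF is_ideal_I])
  qed
  also have "\<dots> = ?c \<mu> \<nu>"
  proof -
    have "(\<Sum>\<alpha>2\<in>ysupp r F. if (\<alpha>1, \<alpha>2) = (\<mu>, \<nu>) then ?c \<alpha>1 \<alpha>2 else 0) =
        (if \<alpha>1 = \<mu> then ?c \<mu> \<nu> else 0)" for \<alpha>1
      using \<nu> by (cases "\<alpha>1 = \<mu>") (simp_all add: sum.delta)
    then show ?thesis using \<mu> by (simp add: sum.delta)
  qed
  finally show ?thesis .
qed

lemma unit_plus_nilpotent_is_unit:
  assumes u: "u * u \<approx> u" and v: "c * v \<approx> u" and N: "nilpotent N" "u * N \<approx> N"
  shows "\<exists>h. (c + N) * h \<approx> u"
proof -
  define w where "w = N * v"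
  obtain n where wn: "w ^ n \<in> I" using nilpotent_mult[OF N(1), of v] by (auto simp: w_def nilpotent_def)
  have uw: "u * w \<approx> w" and wu: "w * u \<approx> w"
    using eqv_mult_right[OF N(2), of v] by (simp_all add: w_def ac_simps)
  define S where "S = (\<Sum>i<n. (- w) ^ i)"
  have "(c + N) * (v * (u * S)) = (c * v + w) * (u * S)" by (simp add: w_def algebra_simps)
  also have "\<dots> \<approx> (u + w) * (u * S)" by (intro eqv_mult_right eqv_add v eqv_refl)
  also have "(u + w) * (u * S) = (u * u + w * u) * S" by (simp add: algebra_simps)
  also have "\<dots> \<approx> (u + u * w) * S" by (intro eqv_mult_right eqv_add u eqv_trans[OF wu eqv_sym[OF uw]])
  also have "(u + u * w) * S = u * ((1 - (- w)) * S)" by (simp add: algebra_simps)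
  also have "\<dots> = u * (1 - (- w) ^ n)" unfolding S_def by (simp add: one_diff_power_eq)
  also have "\<dots> = u - u * (- w) ^ n" by (simp add: algebra_simps)
  also have "\<dots> \<approx> u - 0"
    by (intro eqv_diff eqv_refl) (use wn in \<open>simp add: eqv_0_iff power_minus[of w] mult_left_in_I\<close>)
  finally have "(c + N) * (v * (u * S)) \<approx> u" by simp
  then show ?thesis by blast
qed

end

locale finite_monic_generated = monic_generated r tp I
  for r and tp :: "nat \<Rightarrow> 'a::{comm_ring_1,finite} poly" and I
begin

lemma finite_reduced: "finite {p :: 'a mpoly. keys p \<subseteq> basis_monos r tp}"
  by (rule finite_keys_subset[OF finite_basis_monos])

lemma normal_form_in_reduced: "xpoly r f \<Longrightarrow> normal_form f \<in> {p. keys p \<subseteq> basis_monos r tp}"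
  by (simp add: keys_normal_form)

text \<open>Pigeonhole on the finitely many normal forms of the powers of \<open>s\<close>.\<close>

lemma power_idempotent:
  assumes "xpoly r s"
  shows "\<exists>n\<ge>1. s ^ (n + n) \<approx> s ^ n"
proof -
  let ?f = "\<lambda>k. normal_form (s ^ Suc k)"
  let ?N = "card {p :: 'a mpoly. keys p \<subseteq> basis_monos r tp}"
  have "?f ` {..?N} \<subseteq> {p. keys p \<subseteq> basis_monos r tp}"
    by (rule image_subsetI) (rule normal_form_in_reduced[OF xpoly_power[OF assms]])
  then have "card (?f ` {..?N}) \<le> ?N" by (rule card_mono[OF finite_reduced])
  then have "card (?f ` {..?N}) < card {..?N}" by simp
  then obtain x y where "x \<noteq> y" "?f x = ?f y"
    using pigeonhole[of ?f "{..?N}"] by (auto simp: inj_on_def)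
  then obtain i j where ij: "i < j" "?f i = ?f j" by (metis linorder_neqE_nat)
  define a p where "a = Suc i" and "p = j - i"
  have p1: "p \<ge> 1" using ij by (simp add: p_def)
  have "s ^ a \<approx> normal_form (s ^ a)" by (rule eqv_sym[OF eqv_normal_form])
  also have "normal_form (s ^ a) = normal_form (s ^ (a + p))" using ij by (simp add: a_def p_def)
  also have "\<dots> \<approx> s ^ (a + p)" by (rule eqv_normal_form)
  finally have base: "s ^ a \<approx> s ^ (a + p)" .
  have step: "s ^ (a + l) \<approx> s ^ (a + l + p)" for l
    using eqv_mult_right[OF base, of "s ^ l"] by (simp add: power_add[symmetric] ac_simps)
  have iter: "s ^ (a + l) \<approx> s ^ (a + l + k * p)" for l k
  proof (induction k)
    case (Suc k)
    have "s ^ (a + l + k * p) \<approx> s ^ (a + l + k * p + p)"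
      using step[of "l + k * p"] by (simp add: ac_simps)
    then show ?case using Suc.IH eqv_trans by (simp add: ac_simps)
  qed simp
  define n where "n = a * p"
  have "a \<le> n" using p1 by (simp add: n_def)
  have "1 \<le> n" using p1 by (simp add: n_def a_def)
  have "s ^ (a + (n - a)) \<approx> s ^ (a + (n - a) + a * p)" by (rule iter)
  then have "s ^ n \<approx> s ^ (n + n)" using \<open>a \<le> n\<close> by (simp add: n_def)
  then show ?thesis using \<open>1 \<le> n\<close> eqv_sym by blast
qed

lemma primitive_unit_or_nilpotent:
  assumes u: "idempotent u" "primitive u" and s: "xpoly r s" "u * s \<approx> s"
  shows "(\<exists>v. xpoly r v \<and> s * v \<approx> u) \<or> nilpotent s"
proof -
  obtain n where n: "n \<ge> 1" "s ^ (n + n) \<approx> s ^ n" using power_idempotent[OF s(1)] by blast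
  have sn: "s ^ n = s * s ^ (n - 1)" using n(1) by (simp add: power_eq_if)
  have "s ^ n * u = s ^ (n - 1) * (u * s)" unfolding sn by (simp only: ac_simps)
  also have "\<dots> \<approx> s ^ (n - 1) * s" by (rule eqv_mult_left[OF s(2)])
  finally have "s ^ n * u \<approx> s ^ n" by (simp add: sn mult.commute)
  moreover have "s ^ n * s ^ n \<approx> s ^ n" using n(2) by (simp add: power_add[symmetric])
  ultimately have "s ^ n \<in> I \<or> s ^ n \<approx> u"
    using u(2) xpoly_power[OF s(1)] unfolding primitive_def by blast
  then show ?thesis
  proof
    assume "s ^ n \<in> I"
    then show ?thesis unfolding nilpotent_def by blast
  next
    assume "s ^ n \<approx> u"
    then show ?thesis using xpoly_power[OF s(1), of "n - 1"] unfolding sn by blast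
  qed
qed

definition idempotents_below :: "'a mpoly \<Rightarrow> 'a mpoly set" where
  "idempotents_below u = {w. keys w \<subseteq> basis_monos r tp \<and> w * w \<approx> w \<and> w * u \<approx> w}"

lemma finite_idempotents_below: "finite (idempotents_below u)"
  unfolding idempotents_below_def using finite_reduced by (rule rev_finite_subset) blast

lemma idempotents_below_psubset:
  assumes u: "idempotent u" and w: "idempotent w" "w * u \<approx> w" "\<not> w \<approx> u"
  shows "idempotents_below w \<subset> idempotents_below u"
proof
  show "idempotents_below w \<subseteq> idempotents_below u"
  proof
    fix y assume "y \<in> idempotents_below w"
    then have y: "keys y \<subseteq> basis_monos r tp" "y * y \<approx> y" "y * w \<approx> y"
      by (auto simp: idempotents_below_def)
    have "y * u \<approx> (y * w) * u" by (rule eqv_mult_right[OF eqv_sym[OF y(3)]])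
    also have "(y * w) * u = y * (w * u)" by (simp add: ac_simps)
    also have "\<dots> \<approx> y * w" by (rule eqv_mult_left[OF w(2)])
    also have "\<dots> \<approx> y" by (rule y(3))
    finally show "y \<in> idempotents_below u" using y by (simp add: idempotents_below_def)
  qed
next
  have uXO: "xpoly r u" and uu: "u * u \<approx> u" using u by (auto simp: idempotent_def)
  have nu: "normal_form u \<approx> u" by (rule eqv_normal_form)
  have "normal_form u * normal_form u \<approx> normal_form u"
    using eqv_mult[OF nu nu] uu eqv_sym[OF nu] eqv_trans by blast
  moreover have "normal_form u * u \<approx> normal_form u"
    using eqv_mult_right[OF nu, of u] uu eqv_sym[OF nu] eqv_trans by blast
  ultimately have "normal_form u \<in> idempotents_below u"
    using keys_normal_form[OF uXO] by (simp add: idempotents_below_def)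
  moreover have "normal_form u \<notin> idempotents_below w"
  proof
    assume "normal_form u \<in> idempotents_below w"
    then have "normal_form u * w \<approx> normal_form u" by (simp add: idempotents_below_def)
    then have "u * w \<approx> u" using nu eqv_trans eqv_sym eqv_mult_right by meson
    then have "w \<approx> u" using w(2) eqv_trans eqv_sym by (metis mult.commute)
    with w(3) show False by simp
  qed
  ultimately show "idempotents_below w \<noteq> idempotents_below u" by blast
qed

end

section \<open>Purity of a Hensel lift\<close>

lemma (in monic_generated) mult_in_I_if_mult_ycoeff_in_I:
  assumes z: "xpoly r z" and coeffs: "\<And>\<alpha>. \<alpha> \<in> ysupp r p \<Longrightarrow> z * ycoeff r p \<alpha> \<in> I"
  shows "z * p \<in> I"
proof (rule in_I_if_ycoeff_in_I)
  fix \<alpha>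
  have "z * ycoeff r p \<alpha> \<in> I"
    using coeffs ycoeff_eq_0_if_not_in_ysupp[of \<alpha> r p] is_ideal_0[OF is_ideal_I]
    by (cases "\<alpha> \<in> ysupp r p") auto
  then show "ycoeff r (z * p) \<alpha> \<in> I" by (simp add: ycoeff_mult_xpoly[OF z])
qed

lemma (in monic_generated) leading_ycoeff_not_annihilated:
  assumes z: "xpoly r z" and "z * F \<notin> I"
  shows "\<exists>\<nu>\<in>ysupp r F. z * ycoeff r F \<nu> \<notin> I \<and> (\<forall>\<beta>\<in>ysupp r F. \<nu> < \<beta> \<longrightarrow> z * ycoeff r F \<beta> \<in> I)"
proof -
  define V where "V = {\<beta> \<in> ysupp r F. z * ycoeff r F \<beta> \<notin> I}"
  have "V \<noteq> {}"
  proof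
    assume "V = {}"
    have "z * F \<in> I"
      by (rule mult_in_I_if_mult_ycoeff_in_I[OF z]) (use \<open>V = {}\<close> in \<open>auto simp: V_def\<close>)
    with assms(2) show False by simp
  qed
  have "finite V" by (simp add: V_def)
  then have "Max V \<in> V" using \<open>V \<noteq> {}\<close> by (rule Max_in)
  moreover have "z * ycoeff r F \<beta> \<in> I" if "\<beta> \<in> ysupp r F" "Max V < \<beta>" for \<beta>
  proof (rule ccontr)
    assume "z * ycoeff r F \<beta> \<notin> I"
    with that(1) have "\<beta> \<le> Max V" using \<open>finite V\<close> by (intro Max_ge) (auto simp: V_def)
    with that(2) show False by simp
  qed
  ultimately show ?thesis by (auto simp: V_def)
qed

locale hensel_code = finite_monic_generated r tp I for r tp I +
  fixes G0 G1 :: "'a::{comm_ring_1,finite} mpoly"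
  assumes annihilators_inter: "\<And>f. f * G0 \<in> I \<Longrightarrow> f * G1 \<in> I \<Longrightarrow> f \<in> I"
    and G0_mult_G1: "G0 * G1 \<in> I"
begin

definition in_code :: "'a mpoly \<Rightarrow> bool" where
  "in_code x \<longleftrightarrow> (\<exists>f. x \<approx> G1 * f)"

lemma in_code_mult:
  assumes "in_code x"
  shows "in_code (y * x)"
proof -
  obtain f where "x \<approx> G1 * f" using assms by (auto simp: in_code_def)
  then have "y * x \<approx> G1 * (y * f)" using eqv_mult_left[of x "G1 * f" y] by (simp add: mult.left_commute)
  then show ?thesis by (auto simp: in_code_def)
qed

lemma in_code_union: "in_code x \<Longrightarrow> in_code y \<Longrightarrow> in_code (x + y - x * y)"
  unfolding in_code_def
proof (elim exE)
  fix f g assume "x \<approx> G1 * f" "y \<approx> G1 * g"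
  then have "x + y - x * y \<approx> G1 * f + G1 * g - x * (G1 * g)"
    by (intro eqv_diff eqv_add eqv_mult_left)
  then show "\<exists>h. x + y - x * y \<approx> G1 * h"
    by (intro exI[of _ "f + g - x * g"]) (simp add: algebra_simps)
qed

context
  fixes u m f :: "'a mpoly"
  assumes u: "xpoly r u" "u * u \<approx> u" "primitive u"
    and m: "xpoly r m" "m \<notin> I" "u * m \<approx> m" "m \<approx> G1 * f"
begin

lemma u_mult_ycoeff: "u * ycoeff r (u * p) \<alpha> \<approx> ycoeff r (u * p) \<alpha>"
  by (simp add: ycoeff_mult_xpoly[OF u(1)] idempotent_mult_eqv[OF u(2)])

lemma u_G1_mult_u_f: "u * G1 * (u * f) \<approx> m"
proof -
  have "u * G1 * (u * f) = (u * u) * (G1 * f)" by (simp add: ac_simps)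
  also have "\<dots> \<approx> u * (G1 * f)" by (rule eqv_mult_right[OF u(2)])
  also have "\<dots> \<approx> u * m" by (rule eqv_mult_left[OF eqv_sym[OF m(4)]])
  also have "\<dots> \<approx> m" by (rule m(3))
  finally show ?thesis .
qed

lemma absurd_if_ycoeffs_nilpotent:
  assumes nil: "\<And>\<alpha>. \<alpha> \<in> ysupp r (u * G1) \<Longrightarrow> nilpotent (ycoeff r (u * G1) \<alpha>)"
  shows False
proof -
  let ?T = "ycoeff r (u * G1) ` ysupp r (u * G1)"
  have T: "xpoly r t \<and> nilpotent t" if "t \<in> ?T" for t using that nil xpoly_ycoeff by blast
  have "\<exists>c. xpoly r c \<and> m * c * 1 \<notin> I \<and> (\<forall>t\<in>?T. m * c * t * 1 \<in> I)"
    by (rule annihilate_nilpotents[OF _ T m(1)]) (simp_all add: m(2))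
  then obtain c where c: "xpoly r c" "m * c * 1 \<notin> I" "\<forall>t\<in>?T. m * c * t * 1 \<in> I" by blast
  define z where "z = m * c"
  have z: "xpoly r z" unfolding z_def using m(1) c(1) by (rule xpoly_mult)
  have "z * (u * G1) \<in> I"
    by (rule mult_in_I_if_mult_ycoeff_in_I[OF z]) (use c(3) in \<open>simp add: z_def\<close>)
  moreover have "m * (c * G1) \<approx> u * m * (c * G1)" by (rule eqv_mult_right[OF eqv_sym[OF m(3)]])
  then have "z * G1 \<approx> z * (u * G1)" by (simp add: z_def ac_simps)
  ultimately have "z * G1 \<in> I" by (rule eqv_in_I[rotated])
  moreover have "z * G0 \<in> I"
  proof -
    have "G1 * f * G0 \<in> I" using mult_right_in_I[OF G0_mult_G1, of f] by (simp add: ac_simps)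
    then have "m * G0 \<in> I" by (rule eqv_in_I[OF eqv_mult_right[OF m(4)]])
    then have "(m * G0) * c \<in> I" by (rule mult_right_in_I)
    then show ?thesis by (simp add: z_def ac_simps)
  qed
  ultimately have "z \<in> I" by (rule annihilators_inter[rotated])
  with c(2) show False by (simp add: z_def)
qed

lemma code_contains_u_if_constant_ycoeff_unit:
  assumes "0 \<in> ysupp r (u * G1)" and v: "ycoeff r (u * G1) 0 * v \<approx> u"
    and nil: "\<And>\<alpha>. \<alpha> \<in> ysupp r (u * G1) \<Longrightarrow> \<alpha> \<noteq> 0 \<Longrightarrow> nilpotent (ycoeff r (u * G1) \<alpha>)"
  shows "\<exists>h. u * G1 * h \<approx> u"
proof -
  define c where "c = ycoeff r (u * G1) 0"
  define N where "N = (\<Sum>\<alpha>\<in>ysupp r (u * G1) - {0}. ycoeff r (u * G1) \<alpha> * single \<alpha> 1)"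
  have split: "u * G1 = c + N"
    unfolding N_def c_def using assms(1)
    by (subst poly_mapping_eq_sum_ycoeff[of "u * G1" r]) (simp add: sum.remove)
  have "nilpotent N" unfolding N_def by (intro nilpotent_sum nilpotent_mult nil) auto
  moreover have "u * N \<approx> N"
  proof -
    have N: "N = u * G1 - c" by (simp add: split)
    have "u * (u * G1) - u * c \<approx> u * G1 - c"
      unfolding c_def by (intro eqv_diff idempotent_mult_eqv[OF u(2)] u_mult_ycoeff)
    then show ?thesis by (simp only: N right_diff_distrib)
  qed
  ultimately show ?thesis
    using unit_plus_nilpotent_is_unit[OF u(2) v[folded c_def]] by (simp add: split)
qed

lemma absurd_if_leading_ycoeff_unit:
  assumes \<mu>: "\<mu> \<in> ysupp r (u * G1)" "0 < \<mu>" and v: "xpoly r v" "ycoeff r (u * G1) \<mu> * v \<approx> u"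
    and nil: "\<And>\<alpha>. \<alpha> \<in> ysupp r (u * G1) \<Longrightarrow> \<mu> < \<alpha> \<Longrightarrow> nilpotent (ycoeff r (u * G1) \<alpha>)"
  shows False
proof -
  define g F where "g = u * G1" and "F = u * f"
  have gF: "g * F \<approx> m" unfolding g_def F_def by (rule u_G1_mult_u_f)
  have "u * F \<notin> I"
  proof
    assume "u * F \<in> I"
    then have "g * (u * F) \<in> I" by (rule mult_left_in_I)
    moreover have "g * F \<approx> g * (u * F)"
      unfolding F_def by (rule eqv_sym[OF eqv_mult_left[OF idempotent_mult_eqv[OF u(2)]]])
    ultimately have "g * F \<in> I" by (rule eqv_in_I[rotated])
    with m(2) show False using eqv_in_I[OF eqv_sym[OF gF]] by blast
  qed
  let ?T = "ycoeff r g ` {\<alpha> \<in> ysupp r g. \<mu> < \<alpha>}"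
  have T: "xpoly r t \<and> nilpotent t" if "t \<in> ?T" for t
    using that nil xpoly_ycoeff unfolding g_def by blast
  have "\<exists>c. xpoly r c \<and> u * c * F \<notin> I \<and> (\<forall>t\<in>?T. u * c * t * F \<in> I)"
    by (rule annihilate_nilpotents[OF _ T u(1) \<open>u * F \<notin> I\<close>]) simp
  then obtain c where c: "xpoly r c" "u * c * F \<notin> I" "\<forall>t\<in>?T. u * c * t * F \<in> I" by blast
  define z where "z = u * c"
  have z: "xpoly r z" unfolding z_def using u(1) c(1) by (rule xpoly_mult)
  have "z * F \<notin> I" using c(2) by (simp add: z_def)
  then obtain \<nu> where \<nu>: "\<nu> \<in> ysupp r F" "z * ycoeff r F \<nu> \<notin> I"
    and above_\<nu>: "\<And>\<beta>. \<beta> \<in> ysupp r F \<Longrightarrow> \<nu> < \<beta> \<Longrightarrow> z * ycoeff r F \<beta> \<in> I"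
    using leading_ycoeff_not_annihilated[OF z] by blast
  have "ycoeff r (z * (g * F)) (\<mu> + \<nu>) \<approx> z * ycoeff r g \<mu> * ycoeff r F \<nu>"
    using \<mu>(1) \<nu>(1) c(3) above_\<nu> by (intro ycoeff_mult_leading[OF z]) (auto simp: g_def z_def)
  moreover have "ycoeff r (z * (g * F)) (\<mu> + \<nu>) \<in> I"
  proof -
    have "ycoeff r (z * (g * F) - z * m) (\<mu> + \<nu>) \<in> I"
      using eqv_mult_left[OF gF, of z] by (intro ycoeff_in_I) (simp add: eqv_def)
    moreover have "\<mu> + \<nu> \<noteq> 0" using add_pos_nonneg[OF \<mu>(2) zero_le_poly_mapping[of \<nu>]] by auto
    ultimately show ?thesis by (simp add: ycoeff_diff ycoeff_xpoly[OF xpoly_mult[OF z m(1)]])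
  qed
  ultimately have "z * ycoeff r g \<mu> * ycoeff r F \<nu> \<in> I" using eqv_in_I[OF eqv_sym] by blast
  then have "v * (z * ycoeff r g \<mu> * ycoeff r F \<nu>) \<in> I" by (rule mult_left_in_I)
  moreover have "z * ycoeff r F \<nu> \<approx> v * (z * ycoeff r g \<mu> * ycoeff r F \<nu>)"
  proof -
    have "z * ycoeff r F \<nu> \<approx> z * (u * ycoeff r F \<nu>)"
      unfolding F_def by (rule eqv_sym[OF eqv_mult_left[OF u_mult_ycoeff]])
    also have "\<dots> \<approx> z * ((ycoeff r g \<mu> * v) * ycoeff r F \<nu>)"
      by (intro eqv_mult_left eqv_mult_right) (rule eqv_sym[OF v(2)[folded g_def]])
    finally show ?thesis by (simp add: ac_simps)
  qed
  ultimately show False using \<nu>(2) eqv_in_I by blast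
qed

text \<open>The local factor \<open>u A\<close> meets the code in \<open>m \<notin> I\<close>, hence lies in it. The coefficients
  of \<open>u G\<^sub>1\<close> in the remaining variables are units or nilpotents of \<open>u A\<close>; if the largest unit
  one sits at the constant monomial, \<open>u G\<^sub>1\<close> is a unit of \<open>u A[Y]\<close>, and the other cases are
  absurd.\<close>

lemma primitive_idempotent_in_code: "in_code u"
proof -
  let ?cg = "ycoeff r (u * G1)"
  define U where "U = {\<alpha> \<in> ysupp r (u * G1). \<exists>v. xpoly r v \<and> ?cg \<alpha> * v \<approx> u}"
  have "idempotent u" using u by (simp add: idempotent_def)
  have nil: "nilpotent (?cg \<alpha>)" if "\<alpha> \<in> ysupp r (u * G1)" "\<alpha> \<notin> U" for \<alpha>
    using primitive_unit_or_nilpotent[OF \<open>idempotent u\<close> u(3) xpoly_ycoeff u_mult_ycoeff] that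
    by (auto simp: U_def)
  have "finite U" by (simp add: U_def ysupp_def)
  show ?thesis
  proof (cases "U = {}")
    case True
    then show ?thesis using absurd_if_ycoeffs_nilpotent nil by blast
  next
    case False
    define \<mu> where "\<mu> = Max U"
    have "\<mu> \<in> U" unfolding \<mu>_def using \<open>finite U\<close> False by (rule Max_in)
    then obtain v where \<mu>: "\<mu> \<in> ysupp r (u * G1)" and v: "xpoly r v" "?cg \<mu> * v \<approx> u"
      by (auto simp: U_def)
    have above: "nilpotent (?cg \<alpha>)" if "\<alpha> \<in> ysupp r (u * G1)" "\<mu> < \<alpha>" for \<alpha>
      using that nil Max_ge[OF \<open>finite U\<close>, of \<alpha>] by (force simp: \<mu>_def)
    show ?thesis
    proof (cases "\<mu> = 0")
      case True
      have "nilpotent (?cg \<alpha>)" if "\<alpha> \<in> ysupp r (u * G1)" "\<alpha> \<noteq> 0" for \<alpha>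
        using above that True zero_le_poly_mapping[of \<alpha>] by (simp add: order.order_iff_strict)
      then obtain h where "u * G1 * h \<approx> u"
        using code_contains_u_if_constant_ycoeff_unit \<mu> v(2) True by blast
      then have "u \<approx> G1 * (u * h)" using eqv_sym[of "u * G1 * h" u] by (simp add: ac_simps)
      then show ?thesis unfolding in_code_def by blast
    next
      case False
      then have "0 < \<mu>" using zero_le_poly_mapping[of \<mu>] by (simp add: order.order_iff_strict)
      then show ?thesis using absurd_if_leading_ycoeff_unit \<mu> v above by blast
    qed
  qed
qed

end

text \<open>Split \<open>u\<close> into orthogonal idempotents until they are primitive.\<close>

lemma code_element_fixed_by_idempotent:
  assumes "idempotent u" "xpoly r m" "in_code m" "u * m \<approx> m"
  shows "\<exists>e. idempotent e \<and> in_code e \<and> e * m \<approx> m"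
  using assms
proof (induction "card (idempotents_below u)" arbitrary: u m rule: less_induct)
  case less
  have uXO: "xpoly r u" and uu: "u * u \<approx> u" using less.prems(1) by (auto simp: idempotent_def)
  obtain f where f: "m \<approx> G1 * f" using less.prems(3) by (auto simp: in_code_def)
  show ?case
  proof (cases "primitive u")
    case True
    show ?thesis
    proof (cases "m \<in> I")
      case True
      then have "0 * m \<approx> m" by (simp add: eqv_def is_ideal_uminus[OF is_ideal_I])
      moreover have "idempotent 0" "in_code 0" by (auto simp: idempotent_def in_code_def intro: exI[of _ 0])
      ultimately show ?thesis by blast
    next
      case False
      have "in_code u"
        using primitive_idempotent_in_code[OF uXO uu \<open>primitive u\<close> less.prems(2) False less.prems(4) f] .
      with less.prems show ?thesis by blast
    qed
  next
    case False
    then obtain w where w: "xpoly r w" "w * w \<approx> w" "w * u \<approx> w" "w \<notin> I" "\<not> w \<approx> u"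
      unfolding primitive_def by blast
    have iw: "idempotent w" using w by (simp add: idempotent_def)
    note iw' = idempotent_complement[OF less.prems(1) iw w(3)]
    have "\<not> u - w \<approx> u" using w(4) is_ideal_uminus[OF is_ideal_I, of "- w"] by (auto simp: eqv_def)
    have hyp: "\<exists>e. idempotent e \<and> in_code e \<and> e * (v * m) \<approx> v * m"
      if "card (idempotents_below v) < card (idempotents_below u)" "idempotent v" for v
    proof -
      have "xpoly r v" "v * v \<approx> v" using that(2) by (auto simp: idempotent_def)
      then show ?thesis
        using less.hyps[OF that xpoly_mult[OF _ less.prems(2)] in_code_mult[OF less.prems(3)]
            idempotent_mult_eqv] by blast
    qed
    obtain e1 where e1: "idempotent e1" "in_code e1" "e1 * (w * m) \<approx> w * m"
      using hyp[OF psubset_card_mono[OF finite_idempotents_below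
          idempotents_below_psubset[OF less.prems(1) iw w(3) w(5)]] iw] by blast
    obtain e2 where e2: "idempotent e2" "in_code e2" "e2 * ((u - w) * m) \<approx> (u - w) * m"
      using hyp[OF psubset_card_mono[OF finite_idempotents_below
          idempotents_below_psubset[OF less.prems(1) iw' \<open>\<not> u - w \<approx> u\<close>]] iw'(1)] by blast
    have "(e1 + e2 - e1 * e2) * m \<approx> m" by (rule idempotent_union_fixes[OF e1(3) e2(3) less.prems(4)])
    moreover have "idempotent (e1 + e2 - e1 * e2)" using e1(1) e2(1) by (rule idempotent_union)
    moreover have "in_code (e1 + e2 - e1 * e2)" using e1(2) e2(2) by (rule in_code_union)
    ultimately show ?thesis by blast
  qed
qed

lemma code_pure:
  assumes p: "in_code p" "keys p \<subseteq> basis_monos r tp" and q0: "keys q0 \<subseteq> basis_monos r tp"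
    and pq0: "single 0 c * q0 = p"
  shows "\<exists>q. in_code q \<and> keys q \<subseteq> basis_monos r tp \<and> single 0 c * q = p"
proof -
  have "idempotent 1" by (simp add: idempotent_def)
  from code_element_fixed_by_idempotent[OF this xpoly_if_keys_basis_monos[OF p(2)] p(1)]
  obtain e where e: "idempotent e" "in_code e" "e * p \<approx> p" by auto
  define q where "q = normal_form (e * q0)"
  have xpoly_eq0: "xpoly r (e * q0)"
    using e(1) xpoly_if_keys_basis_monos[OF q0] by (simp add: idempotent_def xpoly_mult)
  have q: "keys q \<subseteq> basis_monos r tp" unfolding q_def by (rule keys_normal_form[OF xpoly_eq0])
  have qe: "q \<approx> e * q0" unfolding q_def by (rule eqv_normal_form)
  obtain f where "e \<approx> G1 * f" using e(2) by (auto simp: in_code_def)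
  then have "q \<approx> G1 * f * q0" using eqv_trans[OF qe eqv_mult_right] by blast
  then have "q \<approx> G1 * (f * q0)" by (simp add: mult.assoc)
  then have "in_code q" unfolding in_code_def by blast
  moreover have "single 0 c * q \<approx> p"
  proof -
    have "single 0 c * q \<approx> single 0 c * (e * q0)" by (rule eqv_mult_left[OF qe])
    also have "single 0 c * (e * q0) = e * p" using pq0 by (simp add: ac_simps)
    finally show ?thesis using e(3) by (rule eqv_trans)
  qed
  then have "single 0 c * q = p"
    by (rule eqv_reduced_eq) (use q p(2) keys_single_0_mult[of c q] in auto)
  ultimately show ?thesis using q by blast
qed

end

section \<open>Minimum distances\<close>

definition weights :: "'z \<Rightarrow> ('i \<Rightarrow> 'z) set \<Rightarrow> nat set" where
  "weights z C = (\<lambda>v. card {m. v m \<noteq> z}) ` (C - {\<lambda>_. z})"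

lemma min_dist_eq_Min_weights: "min_dist z C = Min (weights z C)"
  by (simp add: min_dist_def weights_def)

lemma Min_eq_if_dominated:
  fixes W W' :: "nat set"
  assumes "finite W" and "W' \<subseteq> W" and "\<And>w. w \<in> W \<Longrightarrow> \<exists>w'\<in>W'. w' \<le> w"
  shows "Min W = Min W'"
proof (cases "W = {}")
  case False
  have "Min W \<in> W" using assms(1) False by (rule Min_in)
  then obtain w' where w': "w' \<in> W'" "w' \<le> Min W" using assms(3) by blast
  have "finite W'" using assms(1,2) by (rule finite_subset[rotated])
  then have "Min W' \<le> Min W" using w' by (meson Min_le order.trans)
  moreover have "Min W' \<in> W" using Min_in[OF \<open>finite W'\<close>] w' assms(2) by blast
  then have "Min W \<le> Min W'" using assms(1) by simp
  ultimately show ?thesis by simp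
qed (use assms(2) in simp)

lemma finite_weights_code_vectors:
  fixes K :: "'a::comm_ring_1 mpoly set"
  shows "finite (weights 0 (code_vectors r tp K))"
proof (rule finite_subset)
  show "weights 0 (code_vectors r tp K) \<subseteq> {..card (basis_monos r tp)}"
  proof
    fix w assume "w \<in> weights 0 (code_vectors r tp K)"
    then obtain v where v: "v \<in> code_vectors r tp K" "w = card {m. v m \<noteq> 0}"
      unfolding weights_def by blast
    then obtain p :: "'a mpoly" where "keys p \<subseteq> basis_monos r tp" "w = card {m. lookup p m \<noteq> 0}"
      by (auto simp: code_vectors_def)
    moreover have "{m. lookup p m \<noteq> 0} = keys p" by (auto simp: in_keys_iff)
    ultimately show "w \<in> {..card (basis_monos r tp)}"
      using card_mono[OF finite_basis_monos] by simp
  qed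
qed simp

context nilpotent_chain_ring
begin

lemma in_maximal_if_power_mult_eq_0: "j < t \<Longrightarrow> a ^ j * c = 0 \<Longrightarrow> c \<in> principal a"
  using power_mult_unit_neq_0 by blast

lemma factor_max_power:
  fixes v :: "'k \<Rightarrow> 'a"
  assumes "v \<noteq> (\<lambda>_. 0)"
  obtains j q where "j < t" and "\<And>m. v m = a ^ j * q m" and "\<exists>m. q m \<notin> principal a"
proof -
  let ?J = "{j. j < t \<and> (\<forall>m. \<exists>c. v m = a ^ j * c)}"
  have "finite ?J" by (rule finite_subset[of _ "{..<t}"]) auto
  moreover have "0 \<in> ?J" using t_pos by auto
  ultimately have "Max ?J \<in> ?J" by (intro Max_in) auto
  define j where "j = Max ?J"
  have "j < t" and "\<forall>m. \<exists>c. v m = a ^ j * c" using \<open>Max ?J \<in> ?J\<close> by (simp_all add: j_def)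
  define q where "q m = (SOME c. v m = a ^ j * c)" for m
  have v: "v m = a ^ j * q m" for m
    unfolding q_def by (rule someI_ex) (use \<open>\<forall>m. \<exists>c. v m = a ^ j * c\<close> in blast)
  have "\<exists>m. q m \<notin> principal a"
  proof (rule ccontr)
    assume nounit: "\<not> (\<exists>m. q m \<notin> principal a)"
    have "\<exists>c. v m = a ^ Suc j * c" for m
    proof -
      obtain s where "q m = s * a" using nounit by (auto simp: mem_principal_iff)
      then show ?thesis using v[of m] by (intro exI[of _ s]) (simp add: ac_simps)
    qed
    moreover have "Suc j \<notin> ?J"
    proof
      assume "Suc j \<in> ?J"
      then have "Suc j \<le> j" unfolding j_def by (rule Max_ge[OF \<open>finite ?J\<close>])
      then show False by simp
    qed
    ultimately have "Suc j = t" using \<open>j < t\<close> by auto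
    with \<open>\<And>m. \<exists>c. v m = a ^ Suc j * c\<close> power_t have "v m = 0" for m by auto
    with assms show False by (simp add: fun_eq_iff)
  qed
  then show ?thesis using that[OF \<open>j < t\<close> v] by blast
qed

text \<open>Multiplication by \<open>a\<^sup>t\<^sup>-\<^sup>1\<close> turns the reduction of a codeword into a codeword of the
  same weight.\<close>

lemma weights_reduction_subset:
  assumes "is_ideal K"
  shows "weights (residue a 0) (reduced_vectors a r tp K) \<subseteq> weights 0 (code_vectors r tp K)"
proof
  fix w assume "w \<in> weights (residue a 0) (reduced_vectors a r tp K)"
  then obtain p where p: "p \<in> K" "keys p \<subseteq> basis_monos r tp"
    and nz: "(\<lambda>m. residue a (lookup p m)) \<noteq> (\<lambda>_. residue a 0)"
    and w: "w = card {m. residue a (lookup p m) \<noteq> residue a 0}"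
    by (auto simp: weights_def reduced_vectors_def code_vectors_def)
  define p' where "p' = single 0 (a ^ (t - 1)) * p"
  have lookup_p': "lookup p' m \<noteq> 0 \<longleftrightarrow> residue a (lookup p m) \<noteq> residue a 0" for m
    unfolding p'_def lookup_single_0_mult residue_eq_residue_0_iff top_power_mult_eq_0_iff by simp
  have "p' \<in> K" unfolding p'_def using p(1) by (rule is_ideal_mult_left[OF assms])
  moreover have "keys p' \<subseteq> basis_monos r tp" using keys_single_0_mult p(2) unfolding p'_def by blast
  ultimately have "lookup p' \<in> code_vectors r tp K" by (auto simp: code_vectors_def)
  moreover have "lookup p' \<noteq> (\<lambda>_. 0)" using nz lookup_p' by fastforce
  moreover have "card {m. lookup p' m \<noteq> 0} = w" using w lookup_p' by simp
  ultimately show "w \<in> weights 0 (code_vectors r tp K)" unfolding weights_def by force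
qed

text \<open>Conversely, a nonzero codeword \<open>p = a\<^sup>j q\<^sub>0\<close> with \<open>q\<^sub>0\<close> having a unit coordinate is, by purity,
  \<open>a\<^sup>j q\<close> for a codeword \<open>q\<close> whose reduction is nonzero and supported inside the support of \<open>p\<close>.\<close>

lemma weights_code_dominated:
  assumes pure: "\<And>p q0 j. p \<in> K \<Longrightarrow> keys p \<subseteq> basis_monos r tp \<Longrightarrow> keys q0 \<subseteq> basis_monos r tp \<Longrightarrow>
      single 0 (a ^ j) * q0 = p \<Longrightarrow> \<exists>q\<in>K. keys q \<subseteq> basis_monos r tp \<and> single 0 (a ^ j) * q = p"
    and "w \<in> weights 0 (code_vectors r tp K)"
  shows "\<exists>w'\<in>weights (residue a 0) (reduced_vectors a r tp K). w' \<le> w"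
proof -
  obtain p where p: "p \<in> K" "keys p \<subseteq> basis_monos r tp" and nz: "lookup p \<noteq> (\<lambda>_. 0)"
    and w: "w = card {m. lookup p m \<noteq> 0}"
    using assms(2) by (auto simp: weights_def code_vectors_def)
  obtain j q0f where j: "j < t" and pq0: "\<And>m. lookup p m = a ^ j * q0f m"
    and unit: "\<exists>m. q0f m \<notin> principal a"
    using factor_max_power[OF nz] by blast
  define q0 where "q0 = (\<Sum>m\<in>keys p. single m (q0f m))"
  have lookup_q0: "lookup q0 m = (if m \<in> keys p then q0f m else 0)" for m
    unfolding q0_def lookup_sum by (simp add: lookup_single when_def)
  have "keys q0 \<subseteq> basis_monos r tp"
    using p(2) by (auto simp: in_keys_iff lookup_q0 split: if_splits)
  moreover have "single 0 (a ^ j) * q0 = p"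
    by (rule poly_mapping_eqI) (auto simp: lookup_single_0_mult lookup_q0 pq0 in_keys_iff)
  ultimately obtain q where q: "q \<in> K" "keys q \<subseteq> basis_monos r tp" and pq: "single 0 (a ^ j) * q = p"
    using pure[OF p] by blast
  have lookup_p: "lookup p m = a ^ j * lookup q m" for m
    using pq lookup_single_0_mult by metis
  have "lookup q m - q0f m \<in> principal a" for m
  proof (rule in_maximal_if_power_mult_eq_0[OF j])
    show "a ^ j * (lookup q m - q0f m) = 0"
      using pq0[of m] lookup_p[of m] by (simp add: right_diff_distrib)
  qed
  moreover obtain m0 where "q0f m0 \<notin> principal a" using unit by blast
  ultimately have "lookup q m0 \<notin> principal a"
    using is_ideal_diff[OF is_ideal_principal, of "lookup q m0" a "lookup q m0 - q0f m0"] by auto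
  then have "(\<lambda>m. residue a (lookup q m)) \<noteq> (\<lambda>_. residue a 0)"
    by (metis residue_eq_residue_0_iff)
  moreover have "(\<lambda>m. residue a (lookup q m)) \<in> reduced_vectors a r tp K"
    using q by (auto simp: reduced_vectors_def code_vectors_def)
  ultimately have "(\<lambda>m. residue a (lookup q m)) \<in> reduced_vectors a r tp K - {\<lambda>_. residue a 0}"
    by blast
  then have "card {m. residue a (lookup q m) \<noteq> residue a 0} \<in> weights (residue a 0) (reduced_vectors a r tp K)"
    unfolding weights_def by (rule image_eqI[rotated]) simp
  moreover have "{m. residue a (lookup q m) \<noteq> residue a 0} \<subseteq> {m. lookup p m \<noteq> 0}"
    using power_mult_unit_neq_0[OF j] by (auto simp: residue_eq_residue_0_iff lookup_p)
  then have "card {m. residue a (lookup q m) \<noteq> residue a 0} \<le> w"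
    unfolding w by (rule card_mono[rotated]) (simp flip: in_keys_iff)
  ultimately show ?thesis by blast
qed

lemma min_dist_eq_min_dist_reduction:
  assumes "is_ideal K"
    and "\<And>p q0 j. p \<in> K \<Longrightarrow> keys p \<subseteq> basis_monos r tp \<Longrightarrow> keys q0 \<subseteq> basis_monos r tp \<Longrightarrow>
      single 0 (a ^ j) * q0 = p \<Longrightarrow> \<exists>q\<in>K. keys q \<subseteq> basis_monos r tp \<and> single 0 (a ^ j) * q = p"
  shows "min_dist 0 (code_vectors r tp K) = min_dist (residue a 0) (reduced_vectors a r tp K)"
  unfolding min_dist_eq_Min_weights
  using finite_weights_code_vectors weights_reduction_subset[OF assms(1)]
    weights_code_dominated[OF assms(2)]
  by (rule Min_eq_if_dominated)

end

lemma mult_in_ideal_if_annihilators_comaximal: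
  assumes "is_ideal I" and "1 \<in> {x + y | x y. x \<in> ann_mod I g \<and> y \<in> ann_mod I h}"
  shows "g * h \<in> I"
proof -
  obtain x y where xy: "1 = x + y" "x * g \<in> I" "y * h \<in> I"
    using assms(2) by (auto simp: ann_mod_def)
  have "g * h = (x + y) * (g * h)" by (simp flip: xy(1))
  also have "\<dots> = (x * g) * h + (y * h) * g" by (simp add: algebra_simps)
  also have "\<dots> \<in> I"
    using is_ideal_mult_right[OF assms(1)] \<open>x * g \<in> I\<close> \<open>y * h \<in> I\<close> by (intro is_ideal_add[OF assms(1)])
  finally show ?thesis .
qed

lemma in_ideal_if_annihilates_first_generators:
  fixes t :: nat and G :: "nat \<Rightarrow> 'a::comm_ring_1 mpoly"
  assumes I: "is_ideal I" and inter: "(\<Inter>i\<in>{0..t}. ann_mod I (G i)) = I"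
    and G: "\<And>i. i \<in> {2..t} \<Longrightarrow> G i \<in> I" and f: "f * G 0 \<in> I" "f * G 1 \<in> I"
  shows "f \<in> I"
proof -
  have "f \<in> ann_mod I (G i)" if "i \<in> {0..t}" for i
  proof (cases "i \<le> 1")
    case True
    then have "i = 0 \<or> i = 1" by auto
    then show ?thesis using f by (auto simp: ann_mod_def)
  next
    case False
    then have "G i \<in> I" using that G by auto
    then show ?thesis by (simp add: ann_mod_def is_ideal_mult_left[OF I])
  qed
  then show ?thesis using inter by blast
qed

lemma is_ideal_multiples_mod:
  assumes I: "is_ideal I"
  shows "is_ideal {p. \<exists>f. p - g * f \<in> I}"
  unfolding is_ideal_def
proof (intro conjI ballI allI)
  show "0 \<in> {p. \<exists>f. p - g * f \<in> I}" using is_ideal_0[OF I] by (auto intro: exI[of _ 0])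
next
  fix x y assume "x \<in> {p. \<exists>f. p - g * f \<in> I}" "y \<in> {p. \<exists>f. p - g * f \<in> I}"
  then obtain f h where "x - g * f \<in> I" "y - g * h \<in> I" by blast
  then have "x + y - g * (f + h) \<in> I" using is_ideal_add[OF I] by (fastforce simp: algebra_simps)
  then show "x + y \<in> {p. \<exists>f. p - g * f \<in> I}" by blast
next
  fix x s assume "x \<in> {p. \<exists>f. p - g * f \<in> I}"
  then obtain f where "x - g * f \<in> I" by blast
  then have "s * x - g * (s * f) \<in> I" using is_ideal_mult_left[OF I, of _ s] by (fastforce simp: algebra_simps)
  then show "s * x \<in> {p. \<exists>f. p - g * f \<in> I}" by blast
qed

lemma hensel_lift_code_eq:
  assumes I: "is_ideal I" and "t \<ge> 1" and G: "\<And>i. i \<in> {2..t} \<Longrightarrow> G i \<in> I"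
    and K_def: "K = gen_ideal ((\<lambda>i. single 0 (a ^ (i - 1)) * G i) ` {1..t} \<union> I)"
  shows "K = {p. \<exists>f. p - G 1 * f \<in> I}"
proof
  have "(\<lambda>i. single 0 (a ^ (i - 1)) * G i) ` {1..t} \<union> I \<subseteq> {p. \<exists>f. p - G 1 * f \<in> I}"
  proof safe
    fix i assume "i \<in> {1..t}"
    then show "\<exists>f. single 0 (a ^ (i - 1)) * G i - G 1 * f \<in> I"
      using G[of i] is_ideal_mult_left[OF I] is_ideal_0[OF I]
      by (cases "i = 1") (auto intro: exI[of _ 1] exI[of _ 0])
  next
    fix x assume "x \<in> I"
    then show "\<exists>f. x - G 1 * f \<in> I" by (auto intro: exI[of _ 0])
  qed
  then show "K \<subseteq> {p. \<exists>f. p - G 1 * f \<in> I}"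
    unfolding K_def by (rule gen_ideal_minimal[OF is_ideal_multiples_mod[OF I]])
next
  have K: "is_ideal K" unfolding K_def by (rule is_ideal_gen_ideal)
  have "single 0 (a ^ (1 - 1)) * G 1 \<in> K"
    using \<open>t \<ge> 1\<close> gen_ideal_superset unfolding K_def by force
  then have "G 1 \<in> K" by simp
  moreover have "I \<subseteq> K" using gen_ideal_superset unfolding K_def by blast
  ultimately show "{p. \<exists>f. p - G 1 * f \<in> I} \<subseteq> K"
    using is_ideal_add[OF K, of "p - G 1 * f" "G 1 * f" for p f] is_ideal_mult_right[OF K]
    by fastforce
qed

theorem mainTheorem8:
  fixes a :: "'a::{comm_ring_1, finite}"
    and t r :: nat
    and tp :: "nat \<Rightarrow> 'a poly"
    and I K :: "'a mpoly set"
    and G :: "nat \<Rightarrow> 'a mpoly"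
  assumes chain: "chain_ring TYPE('a)"
    and max: "maximal_ideal (principal a)"
    and nilp: "t \<ge> 1" "a ^ t = 0" "a ^ (t - 1) \<noteq> 0"
    and monic: "\<And>i. i \<in> {1..r} \<Longrightarrow> lead_coeff (tp i) = 1"
    and sqfree: "\<And>i. i \<in> {1..r} \<Longrightarrow> squarefree_mod a (tp i)"
    and I_def: "I = gen_ideal ((\<lambda>i. embed_var i (tp i)) ` {1..r})"
    and adm_inter: "(\<Inter>i\<in>{0..t}. ann_mod I (G i)) = I"
    and adm_coprime: "\<And>i j. i \<in> {0..t} \<Longrightarrow> j \<in> {0..t} \<Longrightarrow> i \<noteq> j \<Longrightarrow>
                        1 \<in> {x + y | x y. x \<in> ann_mod I (G i) \<and> y \<in> ann_mod I (G j)}"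
    and K_def: "K = gen_ideal ((\<lambda>i. Poly_Mapping.single 0 (a ^ (i - 1)) * G i) ` {1..t} \<union> I)"
    and hensel1: "G 1 \<notin> I"
    and hensel2: "\<And>i. i \<in> {2..t} \<Longrightarrow> G i \<in> I"
    and nonzero: "K \<noteq> I"
  shows "min_dist 0 (code_vectors r tp K) = min_dist (residue a 0) (reduced_vectors a r tp K)"
proof -
  interpret nilpotent_chain_ring a t using chain max nilp by unfold_locales auto
  interpret monic_generated r tp I using monic I_def by unfold_locales auto
  have ann: "f \<in> I" if "f * G 0 \<in> I" "f * G 1 \<in> I" for f
    using in_ideal_if_annihilates_first_generators[OF is_ideal_I adm_inter hensel2 that] .
  have G01: "G 0 * G 1 \<in> I"
    using adm_coprime[of 0 1] nilp(1) by (intro mult_in_ideal_if_annihilators_comaximal is_ideal_I) auto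
  interpret hensel_code r tp I "G 0" "G 1" by unfold_locales (use monic I_def ann G01 in auto)
  have K: "K = {p. in_code p}"
    unfolding in_code_def eqv_def by (rule hensel_lift_code_eq[OF is_ideal_I nilp(1) hensel2 K_def])
  show ?thesis
  proof (rule min_dist_eq_min_dist_reduction)
    show "is_ideal K" unfolding K_def by (rule is_ideal_gen_ideal)
    show "\<exists>q\<in>K. keys q \<subseteq> basis_monos r tp \<and> single 0 (a ^ j) * q = p"
      if "p \<in> K" "keys p \<subseteq> basis_monos r tp" "keys q0 \<subseteq> basis_monos r tp" "single 0 (a ^ j) * q0 = p"
      for p q0 j
      using code_pure[of p q0 "a ^ j"] that by (auto simp: K)
  qed
qed

end
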